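(* Let $R$ be a $G$-category and $P\colon R\to R/G$ the canonical functor. Then the pushdown $(P_\bullet,\phi_\bullet)\colon\operatorname{mod}R\to\operatorname{mod}R/G$ is a $G$-precovering, where $\operatorname{mod}R$ carries the $G$-action $X\mapsto{}^\alpha X$.
   Context: $\Bbbk$ is a commutative ring; all categories and functors are $\Bbbk$-linear; $G$ is a group. A $G$-category is a category $\mathcal C$ with a group homomorphism $G\to\operatorname{Aut}(\mathcal C)$, $\alpha\mapsto A_\alpha$, written $\alpha x,\alpha f$. For a $G$-invariant functor $(F,\phi)$ (natural isos $\phi_\alpha\colon F\to FA_\alpha$ with $\phi_1=\mathrm{id}$, $(\phi_\beta A_\alpha)\phi_\alpha=\phi_{\beta\alpha}$), it is a $G$-precovering if each $F^{(1)}_{x,y}\colon\bigoplus_\alpha\mathcal C(\alpha x,y)\to\mathcal C'(Fx,Fy)$, $(f_\alpha)\mapsto\sum F(f_\alpha)\phi_{\alpha,x}$, is bijective. $\operatorname{Mod}R$ is the category of contravariant $\Bbbk$-linear functors $R\to\operatorname{Mod}\Bbbk$; $\operatorname{mod}R$ is its full subcategory of finitely generated modules (quotients of finite direct sums of representables $R(-,x)$). $G$ acts on $\operatorname{Mod}R$ (and on $\operatorname{mod}R$) by ${}^\alpha X:=X\circ A_{\alpha^{-1}}$, ${}^\alpha u:=uA_{\alpha^{-1}}$. $R/G$: objects of $R$; morphisms $x\to y$ are row- and column-finite families $f=(f_{\beta,\alpha})_{(\alpha,\beta)\in G\times G}$ with $f_{\beta,\alpha}\in R(\alpha x,\beta y)$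 and $f_{\gamma\beta,\gamma\alpha}=\gamma(f_{\beta,\alpha})$; composition $(gf)_{\beta,\alpha}=\sum_\gamma g_{\beta,\gamma}f_{\gamma,\alpha}$. $Px=x$, $P(f)=(\delta_{\alpha,\beta}\alpha f)$. Pushdown: for $X\in\operatorname{Mod}R$, $(P_\bullet X)(x)=\bigoplus_{\alpha\in G}X(\alpha x)$, and for $f\colon x\to y$ in $R/G$, $(P_\bullet X)(f)\colon\bigoplus_\beta X(\beta y)\to\bigoplus_\alpha X(\alpha x)$ is the matrix with $(\alpha,\beta)$-entry $X(f_{\beta,\alpha})$; for $u\colon X\to X'$, $(P_\bullet u)_x=\bigoplus_\alpha u_{\alpha x}$. ($P_\bullet$ is left adjoint to $Y\mapsto Y\circ P$ and maps $\operatorname{mod}R$ into $\operatorname{mod}R/G$.) Its invariance adjuster: $(\phi_\bullet)_{\mu,X,x}\colon\bigoplus_\alpha X(\alpha x)\to(P_\bullet{}^\mu X)(x)=\bigoplus_\beta X(\mu^{-1}\beta x)$ maps the summand indexed by $\alpha$ identically onto the summand indexed by $\beta=\mu\alpha$. *)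

theory Defs
  imports Main HOL.Modules "HOL-Library.Function_Algebras"
begin

(* A (small) k-linear category: objects cOb, hom-sets cHom x y (pairwise disjoint,
  arrows know their source and target), composition ccmp g f = g o f, identities,
  and on each hom-set a k-module structure (czero, cadd, csmul) for which composition
  is bilinear. *)

record ('o, 'a, 'k) kcat =
  cOb :: "'o set"
  cHom :: "'o \<Rightarrow> 'o \<Rightarrow> 'a set"
  ccmp :: "'a \<Rightarrow> 'a \<Rightarrow> 'a"
  cid :: "'o \<Rightarrow> 'a"
  czero :: "'o \<Rightarrow> 'o \<Rightarrow> 'a"
  cadd :: "'a \<Rightarrow> 'a \<Rightarrow> 'a"
  csmul :: "'k \<Rightarrow> 'a \<Rightarrow> 'a"

definition kcat :: "('o, 'a, 'k::comm_ring_1) kcat \<Rightarrow> bool" where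
  "kcat C \<longleftrightarrow>
    (\<forall>x\<in>cOb C. \<forall>y\<in>cOb C. \<forall>x'\<in>cOb C. \<forall>y'\<in>cOb C. \<forall>f.
        f \<in> cHom C x y \<and> f \<in> cHom C x' y' \<longrightarrow> x = x' \<and> y = y') \<and>
    (\<forall>x\<in>cOb C. cid C x \<in> cHom C x x) \<and>
    (\<forall>x\<in>cOb C. \<forall>y\<in>cOb C. \<forall>f\<in>cHom C x y.
        ccmp C f (cid C x) = f \<and> ccmp C (cid C y) f = f) \<and>
    (\<forall>x\<in>cOb C. \<forall>y\<in>cOb C. \<forall>z\<in>cOb C. \<forall>f\<in>cHom C x y. \<forall>g\<in>cHom C y z.
        ccmp C g f \<in> cHom C x z) \<and>
    (\<forall>w\<in>cOb C. \<forall>x\<in>cOb C. \<forall>y\<in>cOb C. \<forall>z\<in>cOb C.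
       \<forall>f\<in>cHom C w x. \<forall>g\<in>cHom C x y. \<forall>h\<in>cHom C y z.
        ccmp C h (ccmp C g f) = ccmp C (ccmp C h g) f) \<and>
    (\<forall>x\<in>cOb C. \<forall>y\<in>cOb C.
        czero C x y \<in> cHom C x y \<and>
        (\<forall>f\<in>cHom C x y. \<forall>g\<in>cHom C x y. cadd C f g \<in> cHom C x y) \<and>
        (\<forall>c. \<forall>f\<in>cHom C x y. csmul C c f \<in> cHom C x y) \<and>
        (\<forall>f\<in>cHom C x y. \<forall>g\<in>cHom C x y. \<forall>h\<in>cHom C x y.
            cadd C (cadd C f g) h = cadd C f (cadd C g h)) \<and>
        (\<forall>f\<in>cHom C x y. \<forall>g\<in>cHom C x y. cadd C f g = cadd C g f) \<and>
        (\<forall>f\<in>cHom C x y. cadd C (czero C x y) f = f) \<and>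
        (\<forall>f\<in>cHom C x y. \<exists>g\<in>cHom C x y. cadd C f g = czero C x y) \<and>
        (\<forall>a b. \<forall>f\<in>cHom C x y. csmul C (a + b) f = cadd C (csmul C a f) (csmul C b f)) \<and>
        (\<forall>a. \<forall>f\<in>cHom C x y. \<forall>g\<in>cHom C x y.
            csmul C a (cadd C f g) = cadd C (csmul C a f) (csmul C a g)) \<and>
        (\<forall>a b. \<forall>f\<in>cHom C x y. csmul C (a * b) f = csmul C a (csmul C b f)) \<and>
        (\<forall>f\<in>cHom C x y. csmul C 1 f = f)) \<and>
    (\<forall>x\<in>cOb C. \<forall>y\<in>cOb C. \<forall>z\<in>cOb C.
       \<forall>f\<in>cHom C x y. \<forall>f'\<in>cHom C x y. \<forall>g\<in>cHom C y z. \<forall>g'\<in>cHom C y z. \<forall>c.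
        ccmp C (cadd C g g') f = cadd C (ccmp C g f) (ccmp C g' f) \<and>
        ccmp C g (cadd C f f') = cadd C (ccmp C g f) (ccmp C g f') \<and>
        ccmp C (csmul C c g) f = csmul C c (ccmp C g f) \<and>
        ccmp C g (csmul C c f) = csmul C c (ccmp C g f))"

(* The group G is a type of class group_add; the group product \<alpha>\<beta> is written \<alpha> + \<beta>,
  the unit 1 is 0 and \<alpha>\<inverse> is -\<alpha> (G need not be commutative).
  act \<alpha> x = \<alpha>x, actm \<alpha> f = \<alpha>f; \<alpha> \<mapsto> A_\<alpha> is a group homomorphism into the
  k-linear automorphisms of C. *)

definition Gcat :: "('o, 'a, 'k::comm_ring_1) kcat \<Rightarrow> ('g::group_add \<Rightarrow> 'o \<Rightarrow> 'o)
    \<Rightarrow> ('g \<Rightarrow> 'a \<Rightarrow> 'a) \<Rightarrow> bool" where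
  "Gcat C act actm \<longleftrightarrow> kcat C \<and>
    (\<forall>\<alpha>. \<forall>x\<in>cOb C. act \<alpha> x \<in> cOb C) \<and>
    (\<forall>x\<in>cOb C. act 0 x = x) \<and>
    (\<forall>\<alpha> \<beta>. \<forall>x\<in>cOb C. act (\<alpha> + \<beta>) x = act \<alpha> (act \<beta> x)) \<and>
    (\<forall>x\<in>cOb C. \<forall>y\<in>cOb C. \<forall>f\<in>cHom C x y.
        actm 0 f = f \<and> (\<forall>\<alpha> \<beta>. actm (\<alpha> + \<beta>) f = actm \<alpha> (actm \<beta> f)) \<and>
        (\<forall>\<alpha>. actm \<alpha> f \<in> cHom C (act \<alpha> x) (act \<alpha> y))) \<and>
    (\<forall>\<alpha>. \<forall>x\<in>cOb C. actm \<alpha> (cid C x) = cid C (act \<alpha> x)) \<and>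
    (\<forall>\<alpha>. \<forall>x\<in>cOb C. \<forall>y\<in>cOb C. \<forall>z\<in>cOb C. \<forall>f\<in>cHom C x y. \<forall>g\<in>cHom C y z.
        actm \<alpha> (ccmp C g f) = ccmp C (actm \<alpha> g) (actm \<alpha> f)) \<and>
    (\<forall>\<alpha>. \<forall>x\<in>cOb C. \<forall>y\<in>cOb C. \<forall>f\<in>cHom C x y. \<forall>g\<in>cHom C x y. \<forall>c.
        actm \<alpha> (cadd C f g) = cadd C (actm \<alpha> f) (actm \<alpha> g) \<and>
        actm \<alpha> (csmul C c f) = csmul C c (actm \<alpha> f))"

(* A (right) C-module X, i.e. a contravariant k-linear functor C \<rightarrow> Mod k.
  The k-modules X(x) are realised as k-submodules mSp X x of a fixed k-module
  ('v, sc); mMap X f : X(y) \<rightarrow> X(x) for f : x \<rightarrow> y. *)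

record ('o, 'a, 'v) cmod =
  mSp :: "'o \<Rightarrow> 'v set"
  mMap :: "'a \<Rightarrow> 'v \<Rightarrow> 'v"

definition is_mod :: "('o, 'a, 'k::comm_ring_1) kcat \<Rightarrow> ('k \<Rightarrow> 'v::ab_group_add \<Rightarrow> 'v)
    \<Rightarrow> ('o, 'a, 'v) cmod \<Rightarrow> bool" where
  "is_mod C sc X \<longleftrightarrow>
    (\<forall>x\<in>cOb C. 0 \<in> mSp X x \<and>
        (\<forall>v\<in>mSp X x. \<forall>w\<in>mSp X x. v + w \<in> mSp X x) \<and>
        (\<forall>v\<in>mSp X x. - v \<in> mSp X x) \<and>
        (\<forall>c. \<forall>v\<in>mSp X x. sc c v \<in> mSp X x)) \<and>
    (\<forall>x\<in>cOb C. \<forall>y\<in>cOb C. \<forall>f\<in>cHom C x y. \<forall>v\<in>mSp X y. mMap X f v \<in> mSp X x) \<and>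
    (\<forall>x\<in>cOb C. \<forall>y\<in>cOb C. \<forall>f\<in>cHom C x y. \<forall>v\<in>mSp X y. \<forall>w\<in>mSp X y. \<forall>c.
        mMap X f (v + w) = mMap X f v + mMap X f w \<and>
        mMap X f (sc c v) = sc c (mMap X f v)) \<and>
    (\<forall>x\<in>cOb C. \<forall>v\<in>mSp X x. mMap X (cid C x) v = v) \<and>
    (\<forall>x\<in>cOb C. \<forall>y\<in>cOb C. \<forall>z\<in>cOb C. \<forall>f\<in>cHom C x y. \<forall>g\<in>cHom C y z. \<forall>v\<in>mSp X z.
        mMap X (ccmp C g f) v = mMap X f (mMap X g v)) \<and>
    (\<forall>x\<in>cOb C. \<forall>y\<in>cOb C. \<forall>f\<in>cHom C x y. \<forall>g\<in>cHom C x y. \<forall>v\<in>mSp X y. \<forall>c.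
        mMap X (cadd C f g) v = mMap X f v + mMap X g v \<and>
        mMap X (csmul C c f) v = sc c (mMap X f v))"

(* Finitely generated: there is an epimorphism from a finite direct sum of
  representables \<Oplus>\<^sub>i C(-,x_i) onto X. By Yoneda such a morphism is given by elements
  v_i \<in> X(x_i), and it is surjective iff every element of every X(x) is of the
  form \<Sum>\<^sub>i X(f_i)(v_i) with f_i : x \<rightarrow> x_i. *)

definition fg :: "('o, 'a, 'k::comm_ring_1) kcat \<Rightarrow> ('o, 'a, 'v::ab_group_add) cmod \<Rightarrow> bool" where
  "fg C X \<longleftrightarrow> (\<exists>(n::nat) xs vs. (\<forall>i<n. xs i \<in> cOb C \<and> vs i \<in> mSp X (xs i)) \<and>
     (\<forall>x\<in>cOb C. \<forall>w\<in>mSp X x. \<exists>fs. (\<forall>i<n. fs i \<in> cHom C x (xs i)) \<and>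
         w = (\<Sum>i<n. mMap X (fs i) (vs i))))"

definition modR :: "('o, 'a, 'k::comm_ring_1) kcat \<Rightarrow> ('k \<Rightarrow> 'v::ab_group_add \<Rightarrow> 'v)
    \<Rightarrow> ('o, 'a, 'v) cmod \<Rightarrow> bool" where
  "modR C sc X \<longleftrightarrow> is_mod C sc X \<and> fg C X"

(* Morphisms of modules (natural transformations), represented extensionally:
  u x v = 0 whenever x is not an object or v \<notin> X(x). *)

definition modhom :: "('o, 'a, 'k::comm_ring_1) kcat \<Rightarrow> ('k \<Rightarrow> 'v::ab_group_add \<Rightarrow> 'v)
    \<Rightarrow> ('o, 'a, 'v) cmod \<Rightarrow> ('o, 'a, 'v) cmod \<Rightarrow> ('o \<Rightarrow> 'v \<Rightarrow> 'v) set" where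
  "modhom C sc X Y = {u.
     (\<forall>x\<in>cOb C. \<forall>v\<in>mSp X x. u x v \<in> mSp Y x) \<and>
     (\<forall>x\<in>cOb C. \<forall>v\<in>mSp X x. \<forall>w\<in>mSp X x. \<forall>c.
         u x (v + w) = u x v + u x w \<and> u x (sc c v) = sc c (u x v)) \<and>
     (\<forall>x\<in>cOb C. \<forall>y\<in>cOb C. \<forall>f\<in>cHom C x y. \<forall>v\<in>mSp X y.
         u x (mMap X f v) = mMap Y f (u y v)) \<and>
     (\<forall>x v. \<not> (x \<in> cOb C \<and> v \<in> mSp X x) \<longrightarrow> u x v = 0)}"

definition mid :: "'o set \<Rightarrow> ('o, 'a, 'v::zero) cmod \<Rightarrow> 'o \<Rightarrow> 'v \<Rightarrow> 'v" where
  "mid Ob X = (\<lambda>x v. if x \<in> Ob \<and> v \<in> mSp X x then v else 0)"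

definition mcomp :: "'o set \<Rightarrow> ('o, 'a, 'v::zero) cmod \<Rightarrow> ('o \<Rightarrow> 'v \<Rightarrow> 'v)
    \<Rightarrow> ('o \<Rightarrow> 'v \<Rightarrow> 'v) \<Rightarrow> 'o \<Rightarrow> 'v \<Rightarrow> 'v" where
  "mcomp Ob X v u = (\<lambda>x h. if x \<in> Ob \<and> h \<in> mSp X x then v x (u x h) else 0)"

definition gact :: "('g::group_add \<Rightarrow> 'o \<Rightarrow> 'o) \<Rightarrow> ('g \<Rightarrow> 'a \<Rightarrow> 'a) \<Rightarrow> 'g
    \<Rightarrow> ('o, 'a, 'v) cmod \<Rightarrow> ('o, 'a, 'v) cmod" where
  "gact act actm \<alpha> X = \<lparr>mSp = (\<lambda>x. mSp X (act (- \<alpha>) x)), mMap = (\<lambda>f. mMap X (actm (- \<alpha>) f))\<rparr>"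

definition gactm :: "('o, 'a, 'k) kcat \<Rightarrow> ('g::group_add \<Rightarrow> 'o \<Rightarrow> 'o) \<Rightarrow> 'g
    \<Rightarrow> ('o \<Rightarrow> 'v \<Rightarrow> 'v::zero) \<Rightarrow> 'o \<Rightarrow> 'v \<Rightarrow> 'v" where
  "gactm C act \<alpha> u = (\<lambda>x v. if x \<in> cOb C then u (act (- \<alpha>) x) v else 0)"

definition hsum :: "('o, 'a, 'k) kcat \<Rightarrow> 'o \<Rightarrow> 'o \<Rightarrow> ('i \<Rightarrow> 'a) \<Rightarrow> 'i set \<Rightarrow> 'a" where
  "hsum C x y F S = Finite_Set.fold (\<lambda>i acc. cadd C (F i) acc) (czero C x y) S"

definition cdom :: "('o, 'a, 'k) kcat \<Rightarrow> 'a \<Rightarrow> 'o" where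
  "cdom C f = (SOME x. x \<in> cOb C \<and> (\<exists>y\<in>cOb C. f \<in> cHom C x y))"

definition ccod :: "('o, 'a, 'k) kcat \<Rightarrow> 'a \<Rightarrow> 'o" where
  "ccod C f = (SOME y. y \<in> cOb C \<and> (\<exists>x\<in>cOb C. f \<in> cHom C x y))"

(* A morphism f : x \<rightarrow> y of R/G is a family f \<beta> \<alpha> = f_{\<beta>,\<alpha>} \<in> R(\<alpha>x, \<beta>y),
  row- and column-finite, with f_{\<gamma>\<beta>,\<gamma>\<alpha>} = \<gamma>(f_{\<beta>,\<alpha>}).
  (g f)_{\<beta>,\<alpha>} = \<Sum>_\<gamma> g_{\<beta>,\<gamma>} f_{\<gamma>,\<alpha>}; the objects x, y, z are recovered as the
  source/target of the entries f_{1,1} \<in> R(x,y), g_{1,1} \<in> R(y,z). *)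

definition orbit_cat :: "('o, 'a, 'k::comm_ring_1) kcat \<Rightarrow> ('g::group_add \<Rightarrow> 'o \<Rightarrow> 'o)
    \<Rightarrow> ('g \<Rightarrow> 'a \<Rightarrow> 'a) \<Rightarrow> ('o, 'g \<Rightarrow> 'g \<Rightarrow> 'a, 'k) kcat" where
  "orbit_cat C act actm = \<lparr>
     cOb = cOb C,
     cHom = (\<lambda>x y. {f. (\<forall>\<alpha> \<beta>. f \<beta> \<alpha> \<in> cHom C (act \<alpha> x) (act \<beta> y)) \<and>
                       (\<forall>\<alpha>. finite {\<beta>. f \<beta> \<alpha> \<noteq> czero C (act \<alpha> x) (act \<beta> y)}) \<and>
                       (\<forall>\<beta>. finite {\<alpha>. f \<beta> \<alpha> \<noteq> czero C (act \<alpha> x) (act \<beta> y)}) \<and>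
                       (\<forall>\<gamma> \<alpha> \<beta>. f (\<gamma> + \<beta>) (\<gamma> + \<alpha>) = actm \<gamma> (f \<beta> \<alpha>))}),
     ccmp = (\<lambda>g f. let x = cdom C (f 0 0); y = cdom C (g 0 0); z = ccod C (g 0 0) in
               (\<lambda>\<beta> \<alpha>. hsum C (act \<alpha> x) (act \<beta> z) (\<lambda>\<gamma>. ccmp C (g \<beta> \<gamma>) (f \<gamma> \<alpha>))
                          {\<gamma>. f \<gamma> \<alpha> \<noteq> czero C (act \<alpha> x) (act \<gamma> y)})),
     cid = (\<lambda>x. \<lambda>\<beta> \<alpha>. if \<beta> = \<alpha> then cid C (act \<alpha> x) else czero C (act \<alpha> x) (act \<beta> x)),
     czero = (\<lambda>x y. \<lambda>\<beta> \<alpha>. czero C (act \<alpha> x) (act \<beta> y)),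
     cadd = (\<lambda>g f. \<lambda>\<beta> \<alpha>. cadd C (g \<beta> \<alpha>) (f \<beta> \<alpha>)),
     csmul = (\<lambda>c f. \<lambda>\<beta> \<alpha>. csmul C c (f \<beta> \<alpha>)) \<rparr>"

(* (P\<^sub>\<bullet>X)(x) = \<Oplus>\<^sub>\<alpha> X(\<alpha>x), realised as finitely supported functions h with
  h \<alpha> \<in> X(\<alpha>x); (P\<^sub>\<bullet>X)(f) has (\<alpha>,\<beta>)-entry X(f_{\<beta>,\<alpha>}). *)

definition pd :: "('g::group_add \<Rightarrow> 'o \<Rightarrow> 'o) \<Rightarrow> ('o, 'a, 'v::ab_group_add) cmod
    \<Rightarrow> ('o, 'g \<Rightarrow> 'g \<Rightarrow> 'a, 'g \<Rightarrow> 'v) cmod" where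
  "pd act X = \<lparr>
     mSp = (\<lambda>x. {h. (\<forall>\<alpha>. h \<alpha> \<in> mSp X (act \<alpha> x)) \<and> finite {\<alpha>. h \<alpha> \<noteq> 0}}),
     mMap = (\<lambda>f h. \<lambda>\<alpha>. \<Sum>\<beta>\<in>{\<beta>. h \<beta> \<noteq> 0}. mMap X (f \<beta> \<alpha>) (h \<beta>)) \<rparr>"

definition psc :: "('k \<Rightarrow> 'v \<Rightarrow> 'v) \<Rightarrow> 'k \<Rightarrow> ('g \<Rightarrow> 'v) \<Rightarrow> 'g \<Rightarrow> 'v" where
  "psc sc c h = (\<lambda>\<alpha>. sc c (h \<alpha>))"

definition pdm :: "('o, 'a, 'k) kcat \<Rightarrow> ('g::group_add \<Rightarrow> 'o \<Rightarrow> 'o) \<Rightarrow> ('o, 'a, 'v::ab_group_add) cmod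
    \<Rightarrow> ('o \<Rightarrow> 'v \<Rightarrow> 'v) \<Rightarrow> 'o \<Rightarrow> ('g \<Rightarrow> 'v) \<Rightarrow> 'g \<Rightarrow> 'v" where
  "pdm C act X u = (\<lambda>x h. if x \<in> cOb C \<and> h \<in> mSp (pd act X) x
                          then (\<lambda>\<alpha>. u (act \<alpha> x) (h \<alpha>)) else 0)"

definition phi :: "('o, 'a, 'k) kcat \<Rightarrow> ('g::group_add \<Rightarrow> 'o \<Rightarrow> 'o) \<Rightarrow> 'g
    \<Rightarrow> ('o, 'a, 'v::ab_group_add) cmod \<Rightarrow> 'o \<Rightarrow> ('g \<Rightarrow> 'v) \<Rightarrow> 'g \<Rightarrow> 'v" where
  "phi C act \<mu> X = (\<lambda>x h. if x \<in> cOb C \<and> h \<in> mSp (pd act X) x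
                           then (\<lambda>\<beta>. h (- \<mu> + \<beta>)) else 0)"

definition dsum :: "('o, 'a, 'k::comm_ring_1) kcat \<Rightarrow> ('g::group_add \<Rightarrow> 'o \<Rightarrow> 'o)
    \<Rightarrow> ('g \<Rightarrow> 'a \<Rightarrow> 'a) \<Rightarrow> ('k \<Rightarrow> 'v::ab_group_add \<Rightarrow> 'v) \<Rightarrow> ('o, 'a, 'v) cmod
    \<Rightarrow> ('o, 'a, 'v) cmod \<Rightarrow> ('g \<Rightarrow> 'o \<Rightarrow> 'v \<Rightarrow> 'v) set" where
  "dsum C act actm sc X Y = {fam. (\<forall>\<alpha>. fam \<alpha> \<in> modhom C sc (gact act actm \<alpha> X) Y) \<and>
                                  finite {\<alpha>. fam \<alpha> \<noteq> (\<lambda>_ _. 0)}}"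

definition F1 :: "('o, 'a, 'k) kcat \<Rightarrow> ('g::group_add \<Rightarrow> 'o \<Rightarrow> 'o) \<Rightarrow> ('g \<Rightarrow> 'a \<Rightarrow> 'a)
    \<Rightarrow> ('o, 'a, 'v::ab_group_add) cmod \<Rightarrow> ('g \<Rightarrow> 'o \<Rightarrow> 'v \<Rightarrow> 'v) \<Rightarrow> 'o \<Rightarrow> ('g \<Rightarrow> 'v) \<Rightarrow> 'g \<Rightarrow> 'v" where
  "F1 C act actm X fam = (\<lambda>x h. \<Sum>\<alpha>\<in>{\<alpha>. fam \<alpha> \<noteq> (\<lambda>_ _. 0)}.
       mcomp (cOb C) (pd act X) (pdm C act (gact act actm \<alpha> X) (fam \<alpha>)) (phi C act \<alpha> X) x h)"

end

theory Submission
  imports Defs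
begin

(*
  Elements of (P\<^sub>\<bullet>X)(x) = \<Oplus>\<^sub>\<alpha> X(\<alpha>x) are finitely supported functions on G.
  (1) P\<^sub>\<bullet>X is an R/G-module because every entry of an R/G-morphism acts linearly and
      composition in R/G is a finite sum of composites; it is finitely generated by the
      elements \<delta>\<^sub>v (v concentrated in the summand 1) for generators v of X, since every
      finitely supported row \<alpha>x \<rightarrow> y extends uniquely to an equivariant R/G-morphism.
  (2) \<phi>\<^sub>\<mu> shifts the summands by \<mu>; it is a module isomorphism (with inverse \<phi>\<^sub>\<mu>\<^sub>\<inverse>),
      natural in X, and satisfies the cocycle identities.
  (3) F\<^sup>(\<^sup>1\<^sup>)(f) = \<Sum>\<^sub>\<alpha> P\<^sub>\<bullet>(f\<^sub>\<alpha>) \<circ> \<phi>\<^sub>\<alpha> is a module morphism, as module morphisms are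
      closed under composition and finite sums.  It is injective since F\<^sup>(\<^sup>1\<^sup>)(f) applied
      to \<delta>\<^sub>w returns f\<^sub>\<gamma>(w) in the summand \<gamma>.  It is surjective: U : P\<^sub>\<bullet>X \<rightarrow> P\<^sub>\<bullet>Y is
      recovered from f\<^sub>\<alpha>(y)(w) = U(\<alpha>\<inverse>y)(\<delta>\<^sub>w)\<^sub>\<alpha>, using naturality of U with respect to
      P(g) (giving naturality of f\<^sub>\<alpha>) and to the isomorphisms x \<cong> \<alpha>x (decomposing h into
      its summands); finite generation of X makes the family f finitely supported.
*)

lemma sum_apply_fun: "(\<Sum>i\<in>I. f i) a = (\<Sum>i\<in>I. f i a)"
  by (induction I rule: infinite_finite_induct) auto

lemma sum_eq_single:
  assumes "finite S" "\<And>y. y \<in> S \<Longrightarrow> y \<noteq> a \<Longrightarrow> f y = 0" "a \<notin> S \<Longrightarrow> f a = 0"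
  shows "sum f S = (f a :: 'b::comm_monoid_add)"
proof (cases "a \<in> S")
  case True
  then show ?thesis using assms sum.remove[of S a f] by (simp add: sum.neutral)
next
  case False
  then have "\<forall>y\<in>S. f y = 0" using assms by metis
  then show ?thesis using assms False by (simp add: sum.neutral)
qed

lemma support_shift:
  fixes h :: "'g::group_add \<Rightarrow> 'b::zero"
  shows "{\<beta>. h (- \<mu> + \<beta>) \<noteq> 0} = (\<lambda>\<alpha>. \<mu> + \<alpha>) ` {\<alpha>. h \<alpha> \<noteq> 0}"
proof -
  have "\<beta> = \<mu> + (- \<mu> + \<beta>)" for \<beta> :: 'g by (simp add: add.assoc[symmetric])
  then show ?thesis by force
qed

definition delta :: "'v::zero \<Rightarrow> 'g::zero \<Rightarrow> 'v" where
  "delta v = (\<lambda>\<gamma>. if \<gamma> = 0 then v else 0)"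

lemma delta_add: "delta (v + w) = delta v + (delta w :: 'g::zero \<Rightarrow> 'v::monoid_add)"
  by (auto simp: delta_def fun_eq_iff)

lemma delta_sum: "delta (sum f I) = (\<Sum>i\<in>I. delta (f i) :: 'g::zero \<Rightarrow> 'v::comm_monoid_add)"
  by (auto simp: delta_def fun_eq_iff sum_apply_fun)

context
  fixes C :: "('o, 'a, 'k::comm_ring_1) kcat" and sc :: "'k \<Rightarrow> 'v::ab_group_add \<Rightarrow> 'v"
    and X :: "('o, 'a, 'v) cmod"
  assumes X: "is_mod C sc X"
begin

lemma mod_zero_mem: "x \<in> cOb C \<Longrightarrow> 0 \<in> mSp X x"
  using X by (simp add: is_mod_def)

lemma mod_add_mem: "x \<in> cOb C \<Longrightarrow> v \<in> mSp X x \<Longrightarrow> w \<in> mSp X x \<Longrightarrow> v + w \<in> mSp X x"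
  using X by (simp add: is_mod_def)

lemma mod_neg_mem: "x \<in> cOb C \<Longrightarrow> v \<in> mSp X x \<Longrightarrow> - v \<in> mSp X x"
  using X by (simp add: is_mod_def)

lemma mod_scale_mem: "x \<in> cOb C \<Longrightarrow> v \<in> mSp X x \<Longrightarrow> sc c v \<in> mSp X x"
  using X by (simp add: is_mod_def)

lemma mod_sum_mem: "x \<in> cOb C \<Longrightarrow> (\<And>i. i \<in> I \<Longrightarrow> f i \<in> mSp X x) \<Longrightarrow> sum f I \<in> mSp X x"
  by (induction I rule: infinite_finite_induct) (auto intro: mod_zero_mem mod_add_mem)

lemma mod_map_mem:
  "x \<in> cOb C \<Longrightarrow> y \<in> cOb C \<Longrightarrow> f \<in> cHom C x y \<Longrightarrow> v \<in> mSp X y \<Longrightarrow> mMap X f v \<in> mSp X x"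
  using X by (simp add: is_mod_def)

lemma mod_map_add:
  "x \<in> cOb C \<Longrightarrow> y \<in> cOb C \<Longrightarrow> f \<in> cHom C x y \<Longrightarrow> v \<in> mSp X y \<Longrightarrow> w \<in> mSp X y \<Longrightarrow>
   mMap X f (v + w) = mMap X f v + mMap X f w"
  using X by (simp add: is_mod_def)

lemma mod_map_scale:
  "x \<in> cOb C \<Longrightarrow> y \<in> cOb C \<Longrightarrow> f \<in> cHom C x y \<Longrightarrow> v \<in> mSp X y \<Longrightarrow>
   mMap X f (sc c v) = sc c (mMap X f v)"
  using X by (simp add: is_mod_def)

lemma mod_map_zero: "x \<in> cOb C \<Longrightarrow> y \<in> cOb C \<Longrightarrow> f \<in> cHom C x y \<Longrightarrow> mMap X f 0 = 0"
  using mod_map_add[of x y f 0 0] mod_zero_mem by simp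

lemma mod_map_sum:
  "x \<in> cOb C \<Longrightarrow> y \<in> cOb C \<Longrightarrow> f \<in> cHom C x y \<Longrightarrow> (\<And>i. i \<in> I \<Longrightarrow> v i \<in> mSp X y) \<Longrightarrow>
   mMap X f (sum v I) = (\<Sum>i\<in>I. mMap X f (v i))"
  by (induction I rule: infinite_finite_induct) (simp_all add: mod_map_zero mod_map_add mod_sum_mem)

lemma mod_map_id: "x \<in> cOb C \<Longrightarrow> v \<in> mSp X x \<Longrightarrow> mMap X (cid C x) v = v"
  using X by (simp add: is_mod_def)

lemma mod_map_comp:
  "x \<in> cOb C \<Longrightarrow> y \<in> cOb C \<Longrightarrow> z \<in> cOb C \<Longrightarrow> f \<in> cHom C x y \<Longrightarrow> g \<in> cHom C y z \<Longrightarrow>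
   v \<in> mSp X z \<Longrightarrow> mMap X (ccmp C g f) v = mMap X f (mMap X g v)"
  using X by (simp add: is_mod_def)

lemma mod_map_cadd:
  "x \<in> cOb C \<Longrightarrow> y \<in> cOb C \<Longrightarrow> f \<in> cHom C x y \<Longrightarrow> g \<in> cHom C x y \<Longrightarrow> v \<in> mSp X y \<Longrightarrow>
   mMap X (cadd C f g) v = mMap X f v + mMap X g v"
  using X by (simp add: is_mod_def)

lemma mod_map_csmul:
  "x \<in> cOb C \<Longrightarrow> y \<in> cOb C \<Longrightarrow> f \<in> cHom C x y \<Longrightarrow> v \<in> mSp X y \<Longrightarrow>
   mMap X (csmul C c f) v = sc c (mMap X f v)"
  using X by (simp add: is_mod_def)

end

context
  fixes C :: "('o, 'a, 'k::comm_ring_1) kcat" and sc :: "'k \<Rightarrow> 'v::ab_group_add \<Rightarrow> 'v"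
    and X Y :: "('o, 'a, 'v) cmod" and u :: "'o \<Rightarrow> 'v \<Rightarrow> 'v"
  assumes u: "u \<in> modhom C sc X Y"
begin

lemma modhom_mem: "x \<in> cOb C \<Longrightarrow> v \<in> mSp X x \<Longrightarrow> u x v \<in> mSp Y x"
  using u unfolding modhom_def by blast

lemma modhom_add: "x \<in> cOb C \<Longrightarrow> v \<in> mSp X x \<Longrightarrow> w \<in> mSp X x \<Longrightarrow> u x (v + w) = u x v + u x w"
  using u unfolding modhom_def by blast

lemma modhom_scale: "x \<in> cOb C \<Longrightarrow> v \<in> mSp X x \<Longrightarrow> u x (sc c v) = sc c (u x v)"
  using u unfolding modhom_def by blast

lemma modhom_natural:
  "x \<in> cOb C \<Longrightarrow> y \<in> cOb C \<Longrightarrow> f \<in> cHom C x y \<Longrightarrow> v \<in> mSp X y \<Longrightarrow>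
   u x (mMap X f v) = mMap Y f (u y v)"
  using u unfolding modhom_def by blast

lemma modhom_outside: "\<not> (x \<in> cOb C \<and> v \<in> mSp X x) \<Longrightarrow> u x v = 0"
  using u unfolding modhom_def by blast

lemma modhom_zero:
  assumes X: "is_mod C sc X" shows "u x 0 = 0"
  using modhom_add[of x 0 0] modhom_outside[of x 0] mod_zero_mem[OF X, of x] by force

lemma modhom_sum:
  "is_mod C sc X \<Longrightarrow> x \<in> cOb C \<Longrightarrow> (\<And>i. i \<in> I \<Longrightarrow> v i \<in> mSp X x) \<Longrightarrow>
   u x (sum v I) = (\<Sum>i\<in>I. u x (v i))"
  by (induction I rule: infinite_finite_induct) (simp_all add: modhom_zero modhom_add mod_sum_mem)

end

lemma modhom_comp:
  assumes X: "is_mod C sc X" and u: "u \<in> modhom C sc X Y" and v: "v \<in> modhom C sc Y Z"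
  shows "mcomp (cOb C) X v u \<in> modhom C sc X Z"
  unfolding modhom_def mcomp_def
  using modhom_mem[OF u] modhom_mem[OF v] modhom_add[OF u] modhom_add[OF v]
    modhom_scale[OF u] modhom_scale[OF v] modhom_natural[OF u] modhom_natural[OF v]
    mod_add_mem[OF X] mod_scale_mem[OF X] mod_map_mem[OF X]
  by auto

lemma modhom_sum_closed:
  assumes M: "module sc" and Y: "is_mod C sc Y" and A: "finite A"
    and u: "\<And>\<alpha>. \<alpha> \<in> A \<Longrightarrow> u \<alpha> \<in> modhom C sc X Y"
  shows "(\<Sum>\<alpha>\<in>A. u \<alpha>) \<in> modhom C sc X Y"
  using A u
proof (induction A rule: finite_induct)
  case empty
  have "sc c 0 = 0" for c by (rule module.scale_zero_right[OF M])
  then show ?case using Y by (auto simp: modhom_def mod_zero_mem mod_map_zero)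
next
  case (insert \<alpha> A)
  have v: "(\<Sum>\<alpha>\<in>A. u \<alpha>) \<in> modhom C sc X Y" and w: "u \<alpha> \<in> modhom C sc X Y"
    using insert by auto
  let ?s = "\<lambda>x h. u \<alpha> x h + (\<Sum>\<alpha>\<in>A. u \<alpha>) x h"
  have "?s \<in> modhom C sc X Y"
    using modhom_mem[OF v] modhom_mem[OF w] modhom_add[OF v] modhom_add[OF w]
      modhom_scale[OF v] modhom_scale[OF w] modhom_natural[OF v] modhom_natural[OF w]
      modhom_outside[OF v] modhom_outside[OF w] module.scale_right_distrib[OF M]
      mod_map_add[OF Y] mod_map_mem[OF Y] mod_add_mem[OF Y]
    unfolding modhom_def by (auto simp: algebra_simps)
  then show ?case using insert by (simp add: fun_eq_iff)
qed

locale G_category =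
  fixes R :: "('o, 'a, 'k::comm_ring_1) kcat"
    and act :: "'g::group_add \<Rightarrow> 'o \<Rightarrow> 'o"
    and actm :: "'g \<Rightarrow> 'a \<Rightarrow> 'a"
    and sc :: "'k \<Rightarrow> 'v::ab_group_add \<Rightarrow> 'v"
  assumes Gcat: "Gcat R act actm"
    and module_sc: "module sc"
begin

lemma kcat_R: "kcat R"
  using Gcat by (simp add: Gcat_def)

lemmas kcat_R_unfolded = kcat_R[unfolded kcat_def]

lemma hom_unique:
  "x \<in> cOb R \<Longrightarrow> y \<in> cOb R \<Longrightarrow> x' \<in> cOb R \<Longrightarrow> y' \<in> cOb R \<Longrightarrow>
   f \<in> cHom R x y \<Longrightarrow> f \<in> cHom R x' y' \<Longrightarrow> x = x' \<and> y = y'"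
  using kcat_R_unfolded[THEN conjunct1] by blast

lemma cid_hom: "x \<in> cOb R \<Longrightarrow> cid R x \<in> cHom R x x"
  using kcat_R_unfolded[THEN conjunct2, THEN conjunct1] by blast

lemma ccmp_hom:
  "x \<in> cOb R \<Longrightarrow> y \<in> cOb R \<Longrightarrow> z \<in> cOb R \<Longrightarrow> f \<in> cHom R x y \<Longrightarrow> g \<in> cHom R y z \<Longrightarrow>
   ccmp R g f \<in> cHom R x z"
  using kcat_R_unfolded[THEN conjunct2, THEN conjunct2, THEN conjunct2, THEN conjunct1] by blast

lemma hom_abelian_group:
  assumes "x \<in> cOb R" "y \<in> cOb R"
  shows "czero R x y \<in> cHom R x y \<and>
    (\<forall>f\<in>cHom R x y. \<forall>g\<in>cHom R x y. cadd R f g \<in> cHom R x y) \<and>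
    (\<forall>f\<in>cHom R x y. \<forall>g\<in>cHom R x y. \<forall>h\<in>cHom R x y.
        cadd R (cadd R f g) h = cadd R f (cadd R g h)) \<and>
    (\<forall>f\<in>cHom R x y. \<forall>g\<in>cHom R x y. cadd R f g = cadd R g f) \<and>
    (\<forall>f\<in>cHom R x y. cadd R (czero R x y) f = f) \<and>
    (\<forall>f\<in>cHom R x y. \<exists>g\<in>cHom R x y. cadd R f g = czero R x y)"
  using kcat_R_unfolded[THEN conjunct2, THEN conjunct2, THEN conjunct2, THEN conjunct2,
      THEN conjunct2, THEN conjunct1, rule_format, OF assms]
  by (elim conjE) (intro conjI; assumption)

lemma czero_hom: "x \<in> cOb R \<Longrightarrow> y \<in> cOb R \<Longrightarrow> czero R x y \<in> cHom R x y"
  using hom_abelian_group by blast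

lemma cadd_hom:
  "x \<in> cOb R \<Longrightarrow> y \<in> cOb R \<Longrightarrow> f \<in> cHom R x y \<Longrightarrow> g \<in> cHom R x y \<Longrightarrow> cadd R f g \<in> cHom R x y"
  using hom_abelian_group by blast

lemma cadd_assoc:
  "x \<in> cOb R \<Longrightarrow> y \<in> cOb R \<Longrightarrow> f \<in> cHom R x y \<Longrightarrow> g \<in> cHom R x y \<Longrightarrow> h \<in> cHom R x y \<Longrightarrow>
   cadd R (cadd R f g) h = cadd R f (cadd R g h)"
  using hom_abelian_group by blast

lemma cadd_commute:
  "x \<in> cOb R \<Longrightarrow> y \<in> cOb R \<Longrightarrow> f \<in> cHom R x y \<Longrightarrow> g \<in> cHom R x y \<Longrightarrow> cadd R f g = cadd R g f"
  using hom_abelian_group by blast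

lemma czero_cadd: "x \<in> cOb R \<Longrightarrow> y \<in> cOb R \<Longrightarrow> f \<in> cHom R x y \<Longrightarrow> cadd R (czero R x y) f = f"
  using hom_abelian_group by blast

lemma cadd_inverse:
  "x \<in> cOb R \<Longrightarrow> y \<in> cOb R \<Longrightarrow> f \<in> cHom R x y \<Longrightarrow> \<exists>g\<in>cHom R x y. cadd R f g = czero R x y"
  using hom_abelian_group by blast

text \<open>In the additive group \<open>R(x,y)\<close> the only idempotent is zero; this identifies the
  zero morphism whenever it is characterised only as a neutral element.\<close>
lemma cadd_idem_eq_czero:
  assumes xy: "x \<in> cOb R" "y \<in> cOb R" and a: "a \<in> cHom R x y" and idem: "cadd R a a = a"
  shows "a = czero R x y"
proof -
  obtain g where g: "g \<in> cHom R x y" "cadd R a g = czero R x y"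
    using cadd_inverse[OF xy a] by blast
  have "czero R x y = cadd R (cadd R a a) g" using idem g by simp
  also have "\<dots> = cadd R a (czero R x y)" using cadd_assoc[OF xy a a g(1)] g by simp
  also have "\<dots> = a" using cadd_commute czero_cadd czero_hom xy a by metis
  finally show ?thesis by simp
qed

text \<open>A morphism determines its source and target; composition in \<open>R/G\<close> reads the
  objects off the entries of its arguments in this way.\<close>
lemma cdom_eq: "x \<in> cOb R \<Longrightarrow> y \<in> cOb R \<Longrightarrow> f \<in> cHom R x y \<Longrightarrow> cdom R f = x"
  unfolding cdom_def by (rule some_equality) (auto dest: hom_unique)

lemma ccod_eq: "x \<in> cOb R \<Longrightarrow> y \<in> cOb R \<Longrightarrow> f \<in> cHom R x y \<Longrightarrow> ccod R f = y"
  unfolding ccod_def by (rule some_equality) (auto dest: hom_unique)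

lemma act_ob [simp]: "x \<in> cOb R \<Longrightarrow> act \<alpha> x \<in> cOb R"
  using Gcat by (simp add: Gcat_def)

lemma act_zero [simp]: "x \<in> cOb R \<Longrightarrow> act 0 x = x"
  using Gcat by (simp add: Gcat_def)

lemma act_plus: "x \<in> cOb R \<Longrightarrow> act (\<alpha> + \<beta>) x = act \<alpha> (act \<beta> x)"
  using Gcat by (simp add: Gcat_def)

lemma act_minus_act [simp]: "x \<in> cOb R \<Longrightarrow> act (- \<alpha>) (act \<alpha> x) = x"
  by (metis act_zero act_plus add.left_inverse)

lemma act_act_minus [simp]: "x \<in> cOb R \<Longrightarrow> act \<alpha> (act (- \<alpha>) x) = x"
  by (metis act_zero act_plus add.right_inverse)

lemma actm_zero [simp]: "x \<in> cOb R \<Longrightarrow> y \<in> cOb R \<Longrightarrow> f \<in> cHom R x y \<Longrightarrow> actm 0 f = f"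
  using Gcat by (simp add: Gcat_def)

lemma actm_plus:
  "x \<in> cOb R \<Longrightarrow> y \<in> cOb R \<Longrightarrow> f \<in> cHom R x y \<Longrightarrow> actm (\<alpha> + \<beta>) f = actm \<alpha> (actm \<beta> f)"
  using Gcat by (simp add: Gcat_def)

lemma actm_hom:
  "x \<in> cOb R \<Longrightarrow> y \<in> cOb R \<Longrightarrow> f \<in> cHom R x y \<Longrightarrow> actm \<alpha> f \<in> cHom R (act \<alpha> x) (act \<alpha> y)"
  using Gcat by (simp add: Gcat_def)

lemma actm_cid [simp]: "x \<in> cOb R \<Longrightarrow> actm \<alpha> (cid R x) = cid R (act \<alpha> x)"
  using Gcat by (simp add: Gcat_def)

lemma actm_ccmp:
  "x \<in> cOb R \<Longrightarrow> y \<in> cOb R \<Longrightarrow> z \<in> cOb R \<Longrightarrow> f \<in> cHom R x y \<Longrightarrow> g \<in> cHom R y z \<Longrightarrow>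
   actm \<alpha> (ccmp R g f) = ccmp R (actm \<alpha> g) (actm \<alpha> f)"
  using Gcat unfolding Gcat_def by blast

lemma actm_cadd:
  "x \<in> cOb R \<Longrightarrow> y \<in> cOb R \<Longrightarrow> f \<in> cHom R x y \<Longrightarrow> g \<in> cHom R x y \<Longrightarrow>
   actm \<alpha> (cadd R f g) = cadd R (actm \<alpha> f) (actm \<alpha> g)"
  using Gcat unfolding Gcat_def by blast

lemma actm_csmul:
  "x \<in> cOb R \<Longrightarrow> y \<in> cOb R \<Longrightarrow> f \<in> cHom R x y \<Longrightarrow> actm \<alpha> (csmul R c f) = csmul R c (actm \<alpha> f)"
  using Gcat unfolding Gcat_def by blast

lemma actm_czero [simp]:
  "x \<in> cOb R \<Longrightarrow> y \<in> cOb R \<Longrightarrow> actm \<alpha> (czero R x y) = czero R (act \<alpha> x) (act \<alpha> y)"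
  by (metis act_ob actm_cadd actm_hom czero_cadd cadd_idem_eq_czero czero_hom)

lemma cadd_left_commute:
  "x \<in> cOb R \<Longrightarrow> y \<in> cOb R \<Longrightarrow> f \<in> cHom R x y \<Longrightarrow> g \<in> cHom R x y \<Longrightarrow> h \<in> cHom R x y \<Longrightarrow>
   cadd R f (cadd R g h) = cadd R g (cadd R f h)"
  using cadd_assoc[of x y f g h] cadd_assoc[of x y g f h] cadd_commute[of x y f g] by simp

lemma hsum_hom:
  fixes \<Phi> :: "'a \<Rightarrow> 'b::comm_monoid_add"
  assumes xy: "x \<in> cOb R" "y \<in> cOb R" and A: "finite A"
    and F: "\<And>i. i \<in> A \<Longrightarrow> F i \<in> cHom R x y"
    and \<Phi>0: "\<Phi> (czero R x y) = 0"
    and \<Phi>add: "\<And>a b. a \<in> cHom R x y \<Longrightarrow> b \<in> cHom R x y \<Longrightarrow> \<Phi> (cadd R a b) = \<Phi> a + \<Phi> b"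
  shows "hsum R x y F A \<in> cHom R x y \<and> \<Phi> (hsum R x y F A) = (\<Sum>i\<in>A. \<Phi> (F i))"
proof -
  define H where "H = cHom R x y"
  text \<open>Restrict the folded function to \<open>H\<close>, where it is left-commutative.\<close>
  define r where "r = (\<lambda>a. if a \<in> H then a else czero R x y)"
  define g where "g = (\<lambda>i acc. cadd R (F i) (r acc))"
  have rH: "r a \<in> H" for a using czero_hom xy by (simp add: r_def H_def)
  have fold_eq: "hsum R x y F A = Finite_Set.fold g (czero R x y) A"
    unfolding hsum_def
    by (rule fold_closed_eq[where B=H]) (auto simp: g_def r_def H_def F cadd_hom xy czero_hom)
  interpret comp_fun_commute_on A g
  proof
    fix i j assume ij: "i \<in> A" "j \<in> A"
    show "g j \<circ> g i = g i \<circ> g j"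
    proof
      fix acc
      have ra: "r acc \<in> cHom R x y" using rH by (simp add: H_def)
      have "g j (g i acc) = cadd R (F j) (cadd R (F i) (r acc))"
        using ij F ra cadd_hom xy by (simp add: g_def r_def H_def)
      also have "\<dots> = cadd R (F i) (cadd R (F j) (r acc))"
        using cadd_left_commute[OF xy F F ra] ij by simp
      also have "\<dots> = g i (g j acc)"
        using ij F ra cadd_hom xy by (simp add: g_def r_def H_def)
      finally show "(g j \<circ> g i) acc = (g i \<circ> g j) acc" by simp
    qed
  qed
  have "Finite_Set.fold g (czero R x y) B \<in> H \<and>
      \<Phi> (Finite_Set.fold g (czero R x y) B) = (\<Sum>i\<in>B. \<Phi> (F i))" if "B \<subseteq> A" for B
  proof -
    have "finite B" using A that finite_subset by blast
    then show ?thesis using that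
    proof (induction B rule: finite_induct)
      case empty
      then show ?case using \<Phi>0 czero_hom xy by (simp add: H_def)
    next
      case (insert i B)
      have fold_insert: "Finite_Set.fold g (czero R x y) (insert i B) = g i (Finite_Set.fold g (czero R x y) B)"
        using insert by (intro fold_insert) auto
      have IH: "Finite_Set.fold g (czero R x y) B \<in> H"
        "\<Phi> (Finite_Set.fold g (czero R x y) B) = (\<Sum>i\<in>B. \<Phi> (F i))"
        using insert by auto
      have Fi: "F i \<in> H" using insert F by (auto simp: H_def)
      show ?case unfolding fold_insert using IH Fi insert
        by (auto simp: g_def r_def H_def cadd_hom xy \<Phi>add)
    qed
  qed
  then show ?thesis using fold_eq by (simp add: H_def)
qed

abbreviation RG where "RG \<equiv> orbit_cat R act actm"

lemma RG_ob [simp]: "cOb RG = cOb R"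
  by (simp add: orbit_cat_def)

lemma RG_hom_iff:
  "f \<in> cHom RG x y \<longleftrightarrow> (\<forall>\<alpha> \<beta>. f \<beta> \<alpha> \<in> cHom R (act \<alpha> x) (act \<beta> y)) \<and>
     (\<forall>\<alpha>. finite {\<beta>. f \<beta> \<alpha> \<noteq> czero R (act \<alpha> x) (act \<beta> y)}) \<and>
     (\<forall>\<beta>. finite {\<alpha>. f \<beta> \<alpha> \<noteq> czero R (act \<alpha> x) (act \<beta> y)}) \<and>
     (\<forall>\<gamma> \<alpha> \<beta>. f (\<gamma> + \<beta>) (\<gamma> + \<alpha>) = actm \<gamma> (f \<beta> \<alpha>))"
  by (simp add: orbit_cat_def)

lemma RG_entry: "f \<in> cHom RG x y \<Longrightarrow> f \<beta> \<alpha> \<in> cHom R (act \<alpha> x) (act \<beta> y)"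
  by (simp add: RG_hom_iff)

lemma RG_column_finite: "f \<in> cHom RG x y \<Longrightarrow> finite {\<beta>. f \<beta> \<alpha> \<noteq> czero R (act \<alpha> x) (act \<beta> y)}"
  by (simp add: RG_hom_iff)

lemma RG_row_finite: "f \<in> cHom RG x y \<Longrightarrow> finite {\<alpha>. f \<beta> \<alpha> \<noteq> czero R (act \<alpha> x) (act \<beta> y)}"
  by (simp add: RG_hom_iff)

lemma RG_equivariant: "f \<in> cHom RG x y \<Longrightarrow> f (\<gamma> + \<beta>) (\<gamma> + \<alpha>) = actm \<gamma> (f \<beta> \<alpha>)"
  by (simp add: RG_hom_iff)

lemma RG_ccmp:
  assumes xyz: "x \<in> cOb R" "y \<in> cOb R" "z \<in> cOb R" and f: "f \<in> cHom RG x y" and g: "g \<in> cHom RG y z"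
  shows "ccmp RG g f = (\<lambda>\<beta> \<alpha>. hsum R (act \<alpha> x) (act \<beta> z) (\<lambda>\<gamma>. ccmp R (g \<beta> \<gamma>) (f \<gamma> \<alpha>))
                          {\<gamma>. f \<gamma> \<alpha> \<noteq> czero R (act \<alpha> x) (act \<gamma> y)})"
  using RG_entry[OF f, of 0 0] RG_entry[OF g, of 0 0] xyz
  by (simp add: orbit_cat_def Let_def cdom_eq ccod_eq)

text \<open>An \<open>R/G\<close>-morphism \<open>x \<rightarrow> y\<close> is determined by its row \<open>f_{1,\<alpha>} = F \<alpha> : \<alpha>x \<rightarrow> y\<close>:
  equivariance forces \<open>f_{\<beta>,\<alpha>} = \<beta>(F(\<beta>\<inverse>\<alpha>))\<close>.\<close>
definition orbit_ext :: "('g \<Rightarrow> 'a) \<Rightarrow> 'g \<Rightarrow> 'g \<Rightarrow> 'a" where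
  "orbit_ext F = (\<lambda>\<beta> \<alpha>. actm \<beta> (F (- \<beta> + \<alpha>)))"

lemma orbit_ext_nonzero:
  assumes xy: "x \<in> cOb R" "y \<in> cOb R"
    and ne: "orbit_ext F \<beta> \<alpha> \<noteq> czero R (act \<alpha> x) (act \<beta> y)"
  shows "F (- \<beta> + \<alpha>) \<noteq> czero R (act (- \<beta> + \<alpha>) x) y"
  using ne xy by (auto simp: orbit_ext_def act_plus)

text \<open>The support of a column or a row of \<open>orbit_ext F\<close> is a translate of that of \<open>F\<close>.\<close>
lemma orbit_ext_finite:
  assumes xy: "x \<in> cOb R" "y \<in> cOb R" and fin: "finite {\<alpha>. F \<alpha> \<noteq> czero R (act \<alpha> x) y}"
  shows "finite {\<beta>. orbit_ext F \<beta> \<alpha> \<noteq> czero R (act \<alpha> x) (act \<beta> y)}"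
    and "finite {\<alpha>. orbit_ext F \<beta> \<alpha> \<noteq> czero R (act \<alpha> x) (act \<beta> y)}"
proof -
  let ?S = "{\<alpha>. F \<alpha> \<noteq> czero R (act \<alpha> x) y}"
  have "{\<beta>. orbit_ext F \<beta> \<alpha> \<noteq> czero R (act \<alpha> x) (act \<beta> y)} \<subseteq> (\<lambda>s. \<alpha> + - s) ` ?S"
  proof
    fix \<beta> assume "\<beta> \<in> {\<beta>. orbit_ext F \<beta> \<alpha> \<noteq> czero R (act \<alpha> x) (act \<beta> y)}"
    then have "- \<beta> + \<alpha> \<in> ?S" using orbit_ext_nonzero[OF xy] by blast
    moreover have "\<beta> = \<alpha> + - (- \<beta> + \<alpha>)" by (simp add: minus_add add.assoc)
    ultimately show "\<beta> \<in> (\<lambda>s. \<alpha> + - s) ` ?S" by blast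
  qed
  then show "finite {\<beta>. orbit_ext F \<beta> \<alpha> \<noteq> czero R (act \<alpha> x) (act \<beta> y)}"
    using fin finite_subset by blast
  have "{\<alpha>. orbit_ext F \<beta> \<alpha> \<noteq> czero R (act \<alpha> x) (act \<beta> y)} \<subseteq> (\<lambda>s. \<beta> + s) ` ?S"
  proof
    fix \<alpha> assume "\<alpha> \<in> {\<alpha>. orbit_ext F \<beta> \<alpha> \<noteq> czero R (act \<alpha> x) (act \<beta> y)}"
    then have "- \<beta> + \<alpha> \<in> ?S" using orbit_ext_nonzero[OF xy] by blast
    moreover have "\<alpha> = \<beta> + (- \<beta> + \<alpha>)" by (simp add: add.assoc[symmetric])
    ultimately show "\<alpha> \<in> (\<lambda>s. \<beta> + s) ` ?S" by blast
  qed
  then show "finite {\<alpha>. orbit_ext F \<beta> \<alpha> \<noteq> czero R (act \<alpha> x) (act \<beta> y)}"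
    using fin finite_subset by blast
qed

lemma orbit_ext_hom:
  assumes xy: "x \<in> cOb R" "y \<in> cOb R" and F: "\<And>\<alpha>. F \<alpha> \<in> cHom R (act \<alpha> x) y"
    and fin: "finite {\<alpha>. F \<alpha> \<noteq> czero R (act \<alpha> x) y}"
  shows "orbit_ext F \<in> cHom RG x y"
  unfolding RG_hom_iff
proof (intro conjI allI orbit_ext_finite[OF xy fin])
  fix \<alpha> \<beta> \<gamma> :: 'g
  show "orbit_ext F \<beta> \<alpha> \<in> cHom R (act \<alpha> x) (act \<beta> y)"
    using actm_hom[OF act_ob[OF xy(1)] xy(2) F[of "- \<beta> + \<alpha>"], of \<beta>] xy
    by (simp add: orbit_ext_def act_plus[symmetric] add.assoc[symmetric])
  have "- (\<gamma> + \<beta>) + (\<gamma> + \<alpha>) = - \<beta> + \<alpha>" by (metis add.assoc minus_add minus_add_cancel)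
  then show "orbit_ext F (\<gamma> + \<beta>) (\<gamma> + \<alpha>) = actm \<gamma> (orbit_ext F \<beta> \<alpha>)"
    unfolding orbit_ext_def using actm_plus[OF act_ob[OF xy(1)] xy(2) F] by simp
qed

lemma orbit_ext_row: "x \<in> cOb R \<Longrightarrow> y \<in> cOb R \<Longrightarrow> F \<alpha> \<in> cHom R (act \<alpha> x) y \<Longrightarrow> orbit_ext F 0 \<alpha> = F \<alpha>"
  using actm_zero[of "act \<alpha> x" y "F \<alpha>"] by (simp add: orbit_ext_def)

text \<open>The canonical functor \<open>P : R \<rightarrow> R/G\<close> on morphisms: \<open>P(g)_{\<beta>,\<alpha>} = \<delta>_{\<alpha>,\<beta>} \<alpha>g\<close>.\<close>
definition Pmor :: "'o \<Rightarrow> 'o \<Rightarrow> 'a \<Rightarrow> 'g \<Rightarrow> 'g \<Rightarrow> 'a" where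
  "Pmor a b g = orbit_ext (\<lambda>\<delta>. if \<delta> = 0 then g else czero R (act \<delta> a) b)"

text \<open>The isomorphism \<open>x \<cong> \<alpha>x\<close> in \<open>R/G\<close> whose row has the identity of \<open>\<alpha>x\<close> at \<open>\<alpha>\<close>.\<close>
definition shift_mor :: "'o \<Rightarrow> 'g \<Rightarrow> 'g \<Rightarrow> 'g \<Rightarrow> 'a" where
  "shift_mor x \<alpha> = orbit_ext (\<lambda>\<delta>. if \<delta> = \<alpha> then cid R (act \<alpha> x) else czero R (act \<delta> x) (act \<alpha> x))"

lemma Pmor_hom:
  assumes ab: "a \<in> cOb R" "b \<in> cOb R" and g: "g \<in> cHom R a b"
  shows "Pmor a b g \<in> cHom RG a b"
  unfolding Pmor_def
  by (rule orbit_ext_hom[OF ab]) (use g ab czero_hom in \<open>auto intro: finite_subset[of _ "{0}"]\<close>)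

lemma shift_mor_hom:
  assumes x: "x \<in> cOb R"
  shows "shift_mor x \<alpha> \<in> cHom RG x (act \<alpha> x)"
  unfolding shift_mor_def
  by (rule orbit_ext_hom[OF x act_ob[OF x]]) (use x czero_hom cid_hom in \<open>auto intro: finite_subset[of _ "{\<alpha>}"]\<close>)

lemma mod_map_czero:
  assumes X: "is_mod R sc X" and xy: "x \<in> cOb R" "y \<in> cOb R" and v: "v \<in> mSp X y"
  shows "mMap X (czero R x y) v = 0"
  using mod_map_cadd[OF X xy czero_hom[OF xy] czero_hom[OF xy] v] czero_cadd[OF xy czero_hom[OF xy]]
  by simp

lemma pd_space_iff: "h \<in> mSp (pd act X) x \<longleftrightarrow> (\<forall>\<alpha>. h \<alpha> \<in> mSp X (act \<alpha> x)) \<and> finite {\<alpha>. h \<alpha> \<noteq> 0}"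
  by (simp add: pd_def)

lemma pd_map_eq: "mMap (pd act X) f h = (\<lambda>\<alpha>. \<Sum>\<beta>\<in>{\<beta>. h \<beta> \<noteq> 0}. mMap X (f \<beta> \<alpha>) (h \<beta>))"
  by (simp add: pd_def)

lemma psc_apply [simp]: "psc sc c h \<alpha> = sc c (h \<alpha>)"
  by (simp add: psc_def)

lemma module_psc: "module (psc sc)"
  using module_sc
  by unfold_locales (simp_all add: psc_def fun_eq_iff module.scale_right_distrib
      module.scale_left_distrib module.scale_scale module.scale_one)

lemma sc_zero [simp]: "sc c 0 = 0"
  by (rule module.scale_zero_right[OF module_sc])

lemma delta_scale: "delta (sc c v) = psc sc c (delta v)"
  by (auto simp: delta_def fun_eq_iff)

context
  fixes X assumes X: "is_mod R sc X"
begin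

lemma entry_map:
  assumes f: "f \<in> cHom RG x y" and xy: "x \<in> cOb R" "y \<in> cOb R"
  shows "mMap X (f \<beta> \<alpha>) 0 = 0"
    "v \<in> mSp X (act \<beta> y) \<Longrightarrow> mMap X (f \<beta> \<alpha>) v \<in> mSp X (act \<alpha> x)"
    "(\<And>i. i \<in> I \<Longrightarrow> u i \<in> mSp X (act \<beta> y)) \<Longrightarrow>
       mMap X (f \<beta> \<alpha>) (sum u I) = (\<Sum>i\<in>I. mMap X (f \<beta> \<alpha>) (u i))"
proof -
  have e: "act \<alpha> x \<in> cOb R" "act \<beta> y \<in> cOb R" "f \<beta> \<alpha> \<in> cHom R (act \<alpha> x) (act \<beta> y)"
    using xy RG_entry[OF f] by auto
  show "mMap X (f \<beta> \<alpha>) 0 = 0" by (rule mod_map_zero[OF X e])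
  show "v \<in> mSp X (act \<beta> y) \<Longrightarrow> mMap X (f \<beta> \<alpha>) v \<in> mSp X (act \<alpha> x)"
    by (rule mod_map_mem[OF X e])
  show "(\<And>i. i \<in> I \<Longrightarrow> u i \<in> mSp X (act \<beta> y)) \<Longrightarrow>
       mMap X (f \<beta> \<alpha>) (sum u I) = (\<Sum>i\<in>I. mMap X (f \<beta> \<alpha>) (u i))"
    by (rule mod_map_sum[OF X e])
qed

lemma pd_map_superset:
  assumes xy: "x \<in> cOb R" "y \<in> cOb R" and f: "f \<in> cHom RG x y"
    and S: "finite S" "{\<beta>. h \<beta> \<noteq> 0} \<subseteq> S"
  shows "mMap (pd act X) f h \<alpha> = (\<Sum>\<beta>\<in>S. mMap X (f \<beta> \<alpha>) (h \<beta>))"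
  unfolding pd_map_eq using S by (intro sum.mono_neutral_left) (auto simp: entry_map[OF f xy])

lemma pd_zero_mem: "x \<in> cOb R \<Longrightarrow> 0 \<in> mSp (pd act X) x"
  by (simp add: pd_space_iff mod_zero_mem[OF X])

lemma pd_add_mem:
  assumes x: "x \<in> cOb R" and v: "v \<in> mSp (pd act X) x" and w: "w \<in> mSp (pd act X) x"
  shows "v + w \<in> mSp (pd act X) x"
proof -
  have "{\<alpha>. (v + w) \<alpha> \<noteq> 0} \<subseteq> {\<alpha>. v \<alpha> \<noteq> 0} \<union> {\<alpha>. w \<alpha> \<noteq> 0}" by auto
  then show ?thesis using v w x by (auto simp: pd_space_iff intro: mod_add_mem[OF X] finite_subset)
qed

lemma pd_neg_mem: "x \<in> cOb R \<Longrightarrow> v \<in> mSp (pd act X) x \<Longrightarrow> - v \<in> mSp (pd act X) x"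
  by (auto simp: pd_space_iff intro: mod_neg_mem[OF X])

lemma pd_scale_mem:
  assumes x: "x \<in> cOb R" and v: "v \<in> mSp (pd act X) x"
  shows "psc sc c v \<in> mSp (pd act X) x"
proof -
  have "{\<alpha>. sc c (v \<alpha>) \<noteq> 0} \<subseteq> {\<alpha>. v \<alpha> \<noteq> 0}" by auto
  then show ?thesis using v x by (auto simp: pd_space_iff intro: mod_scale_mem[OF X] finite_subset)
qed

lemma pd_map_mem:
  assumes xy: "x \<in> cOb R" "y \<in> cOb R" and f: "f \<in> cHom RG x y" and h: "h \<in> mSp (pd act X) y"
  shows "mMap (pd act X) f h \<in> mSp (pd act X) x"
proof -
  have hf: "finite {\<beta>. h \<beta> \<noteq> 0}" and hs: "\<And>\<beta>. h \<beta> \<in> mSp X (act \<beta> y)"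
    using h by (auto simp: pd_space_iff)
  text \<open>Row finiteness of \<open>f\<close> makes the result finitely supported.\<close>
  let ?T = "\<Union>\<beta>\<in>{\<beta>. h \<beta> \<noteq> 0}. {\<alpha>. f \<beta> \<alpha> \<noteq> czero R (act \<alpha> x) (act \<beta> y)}"
  have "{\<alpha>. mMap (pd act X) f h \<alpha> \<noteq> 0} \<subseteq> ?T"
  proof
    fix \<alpha> assume "\<alpha> \<in> {\<alpha>. mMap (pd act X) f h \<alpha> \<noteq> 0}"
    then obtain \<beta> where "h \<beta> \<noteq> 0" "mMap X (f \<beta> \<alpha>) (h \<beta>) \<noteq> 0"
      unfolding pd_map_eq by (auto dest: sum.not_neutral_contains_not_neutral)
    then show "\<alpha> \<in> ?T" using mod_map_czero[OF X] hs xy by fastforce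
  qed
  moreover have "finite ?T" using hf RG_row_finite[OF f] by auto
  ultimately have "finite {\<alpha>. mMap (pd act X) f h \<alpha> \<noteq> 0}" by (rule finite_subset)
  moreover have "mMap (pd act X) f h \<alpha> \<in> mSp X (act \<alpha> x)" for \<alpha>
    unfolding pd_map_eq using xy hs by (auto intro!: mod_sum_mem[OF X] entry_map(2)[OF f xy])
  ultimately show ?thesis by (simp add: pd_space_iff)
qed

lemma pd_map_add:
  assumes xy: "x \<in> cOb R" "y \<in> cOb R" and f: "f \<in> cHom RG x y"
    and v: "v \<in> mSp (pd act X) y" and w: "w \<in> mSp (pd act X) y"
  shows "mMap (pd act X) f (v + w) = mMap (pd act X) f v + mMap (pd act X) f w"
proof
  fix \<alpha>
  define S where "S = {\<beta>. v \<beta> \<noteq> 0} \<union> {\<beta>. w \<beta> \<noteq> 0}"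
  have S: "finite S" using v w by (simp add: S_def pd_space_iff)
  have vs: "\<And>\<beta>. v \<beta> \<in> mSp X (act \<beta> y)" "\<And>\<beta>. w \<beta> \<in> mSp X (act \<beta> y)"
    using v w by (auto simp: pd_space_iff)
  have "mMap (pd act X) f (v + w) \<alpha> = (\<Sum>\<beta>\<in>S. mMap X (f \<beta> \<alpha>) (v \<beta> + w \<beta>))"
    by (subst pd_map_superset[OF xy f S(1)]) (auto simp: S_def)
  also have "\<dots> = (\<Sum>\<beta>\<in>S. mMap X (f \<beta> \<alpha>) (v \<beta>)) + (\<Sum>\<beta>\<in>S. mMap X (f \<beta> \<alpha>) (w \<beta>))"
    using mod_map_add[OF X _ _ RG_entry[OF f] vs] xy by (simp add: sum.distrib)
  also have "\<dots> = mMap (pd act X) f v \<alpha> + mMap (pd act X) f w \<alpha>"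
    using pd_map_superset[OF xy f S(1)] by (simp add: S_def)
  finally show "mMap (pd act X) f (v + w) \<alpha> = (mMap (pd act X) f v + mMap (pd act X) f w) \<alpha>"
    by simp
qed

lemma pd_map_scale:
  assumes xy: "x \<in> cOb R" "y \<in> cOb R" and f: "f \<in> cHom RG x y" and v: "v \<in> mSp (pd act X) y"
  shows "mMap (pd act X) f (psc sc c v) = psc sc c (mMap (pd act X) f v)"
proof
  fix \<alpha>
  define S where "S = {\<beta>. v \<beta> \<noteq> 0}"
  have S: "finite S" using v by (simp add: S_def pd_space_iff)
  have vs: "\<And>\<beta>. v \<beta> \<in> mSp X (act \<beta> y)" using v by (auto simp: pd_space_iff)
  have "mMap (pd act X) f (psc sc c v) \<alpha> = (\<Sum>\<beta>\<in>S. mMap X (f \<beta> \<alpha>) (sc c (v \<beta>)))"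
    by (subst pd_map_superset[OF xy f S]) (auto simp: S_def)
  also have "\<dots> = sc c (\<Sum>\<beta>\<in>S. mMap X (f \<beta> \<alpha>) (v \<beta>))"
    using mod_map_scale[OF X _ _ RG_entry[OF f] vs] xy
    by (simp add: module.scale_sum_right[OF module_sc])
  also have "\<dots> = psc sc c (mMap (pd act X) f v) \<alpha>"
    by (simp add: S_def pd_map_eq)
  finally show "mMap (pd act X) f (psc sc c v) \<alpha> = psc sc c (mMap (pd act X) f v) \<alpha>" .
qed

lemma pd_map_id:
  assumes x: "x \<in> cOb R" and v: "v \<in> mSp (pd act X) x"
  shows "mMap (pd act X) (cid RG x) v = v"
proof
  fix \<alpha>
  have vs: "\<And>\<beta>. v \<beta> \<in> mSp X (act \<beta> x)" and vf: "finite {\<beta>. v \<beta> \<noteq> 0}"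
    using v by (auto simp: pd_space_iff)
  define F where "F = (\<lambda>\<beta>. mMap X (if \<beta> = \<alpha> then cid R (act \<alpha> x) else czero R (act \<alpha> x) (act \<beta> x)) (v \<beta>))"
  have "mMap (pd act X) (cid RG x) v \<alpha> = sum F {\<beta>. v \<beta> \<noteq> 0}"
    unfolding pd_map_eq by (simp add: orbit_cat_def F_def)
  also have "\<dots> = F \<alpha>"
    by (rule sum_eq_single[OF vf])
      (auto simp: F_def mod_map_czero[OF X] vs x mod_map_zero[OF X _ _ cid_hom])
  also have "\<dots> = v \<alpha>" using mod_map_id[OF X] vs x by (simp add: F_def)
  finally show "mMap (pd act X) (cid RG x) v \<alpha> = v \<alpha>" .
qed

lemma pd_map_cadd:
  assumes xy: "x \<in> cOb R" "y \<in> cOb R" and f: "f \<in> cHom RG x y" and g: "g \<in> cHom RG x y"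
    and v: "v \<in> mSp (pd act X) y"
  shows "mMap (pd act X) (cadd RG f g) v = mMap (pd act X) f v + mMap (pd act X) g v"
proof -
  have vs: "\<And>\<beta>. v \<beta> \<in> mSp X (act \<beta> y)" using v by (auto simp: pd_space_iff)
  show ?thesis unfolding pd_map_eq
    using mod_map_cadd[OF X _ _ RG_entry[OF f] RG_entry[OF g] vs] xy
    by (simp add: orbit_cat_def sum.distrib fun_eq_iff)
qed

lemma pd_map_csmul:
  assumes xy: "x \<in> cOb R" "y \<in> cOb R" and f: "f \<in> cHom RG x y" and v: "v \<in> mSp (pd act X) y"
  shows "mMap (pd act X) (csmul RG c f) v = psc sc c (mMap (pd act X) f v)"
proof -
  have vs: "\<And>\<beta>. v \<beta> \<in> mSp X (act \<beta> y)" using v by (auto simp: pd_space_iff)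
  show ?thesis unfolding pd_map_eq
    using mod_map_csmul[OF X _ _ RG_entry[OF f] vs] xy
    by (simp add: orbit_cat_def module.scale_sum_right[OF module_sc] fun_eq_iff)
qed

lemma entry_map_ccmp:
  assumes xyz: "x \<in> cOb R" "y \<in> cOb R" "z \<in> cOb R" and f: "f \<in> cHom RG x y" and g: "g \<in> cHom RG y z"
    and v: "v \<in> mSp X (act \<beta> z)"
  shows "mMap X (ccmp RG g f \<beta> \<alpha>) v =
    (\<Sum>\<gamma>\<in>{\<gamma>. f \<gamma> \<alpha> \<noteq> czero R (act \<alpha> x) (act \<gamma> y)}. mMap X (f \<gamma> \<alpha>) (mMap X (g \<beta> \<gamma>) v))"
proof -
  let ?\<Gamma> = "{\<gamma>. f \<gamma> \<alpha> \<noteq> czero R (act \<alpha> x) (act \<gamma> y)}"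
  have gf: "ccmp R (g \<beta> \<gamma>) (f \<gamma> \<alpha>) \<in> cHom R (act \<alpha> x) (act \<beta> z)" for \<gamma>
    by (rule ccmp_hom[of _ "act \<gamma> y"]) (auto simp: xyz RG_entry[OF f] RG_entry[OF g])
  have "mMap X (ccmp RG g f \<beta> \<alpha>) v = (\<Sum>\<gamma>\<in>?\<Gamma>. mMap X (ccmp R (g \<beta> \<gamma>) (f \<gamma> \<alpha>)) v)"
    unfolding RG_ccmp[OF xyz f g]
  proof (rule conjunct2[OF hsum_hom])
    show "mMap X (czero R (act \<alpha> x) (act \<beta> z)) v = 0" using mod_map_czero[OF X] xyz v by simp
    show "mMap X (cadd R a b) v = mMap X a v + mMap X b v"
      if "a \<in> cHom R (act \<alpha> x) (act \<beta> z)" "b \<in> cHom R (act \<alpha> x) (act \<beta> z)" for a b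
      using mod_map_cadd[OF X _ _ that v] xyz by simp
  qed (use xyz RG_column_finite[OF f] gf in auto)
  also have "\<dots> = (\<Sum>\<gamma>\<in>?\<Gamma>. mMap X (f \<gamma> \<alpha>) (mMap X (g \<beta> \<gamma>) v))"
    using mod_map_comp[OF X _ _ _ RG_entry[OF f] RG_entry[OF g] v] xyz by simp
  finally show ?thesis .
qed

lemma pd_map_comp:
  assumes xyz: "x \<in> cOb R" "y \<in> cOb R" "z \<in> cOb R" and f: "f \<in> cHom RG x y" and g: "g \<in> cHom RG y z"
    and v: "v \<in> mSp (pd act X) z"
  shows "mMap (pd act X) (ccmp RG g f) v = mMap (pd act X) f (mMap (pd act X) g v)"
proof
  fix \<alpha>
  define \<Gamma> where "\<Gamma> = {\<gamma>. f \<gamma> \<alpha> \<noteq> czero R (act \<alpha> x) (act \<gamma> y)}"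
  have \<Gamma>: "finite \<Gamma>" using RG_column_finite[OF f] by (simp add: \<Gamma>_def)
  have vs: "\<And>\<beta>. v \<beta> \<in> mSp X (act \<beta> z)" using v by (auto simp: pd_space_iff)
  define w where "w = mMap (pd act X) g v"
  have w: "w \<in> mSp (pd act X) y" using pd_map_mem[OF xyz(2,3) g v] by (simp add: w_def)
  then have ws: "\<And>\<gamma>. w \<gamma> \<in> mSp X (act \<gamma> y)" and wf: "finite {\<gamma>. w \<gamma> \<noteq> 0}"
    by (auto simp: pd_space_iff)
  have "mMap (pd act X) (ccmp RG g f) v \<alpha> =
     (\<Sum>\<beta>\<in>{\<beta>. v \<beta> \<noteq> 0}. \<Sum>\<gamma>\<in>\<Gamma>. mMap X (f \<gamma> \<alpha>) (mMap X (g \<beta> \<gamma>) (v \<beta>)))"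
    unfolding pd_map_eq \<Gamma>_def using entry_map_ccmp[OF xyz f g vs] by simp
  also have "\<dots> = (\<Sum>\<gamma>\<in>\<Gamma>. \<Sum>\<beta>\<in>{\<beta>. v \<beta> \<noteq> 0}. mMap X (f \<gamma> \<alpha>) (mMap X (g \<beta> \<gamma>) (v \<beta>)))"
    by (rule sum.swap)
  also have "\<dots> = (\<Sum>\<gamma>\<in>\<Gamma>. mMap X (f \<gamma> \<alpha>) (w \<gamma>))"
    unfolding w_def pd_map_eq
    by (rule sum.cong[OF refl], rule entry_map(3)[OF f xyz(1,2), symmetric],
        rule entry_map(2)[OF g xyz(2,3) vs])
  also have "\<dots> = (\<Sum>\<gamma>\<in>{\<gamma>. w \<gamma> \<noteq> 0}. mMap X (f \<gamma> \<alpha>) (w \<gamma>))"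
    using \<Gamma> wf by (intro sum.mono_neutral_cong)
      (auto simp: \<Gamma>_def mod_map_czero[OF X] ws xyz entry_map(1)[OF f xyz(1,2)])
  also have "\<dots> = mMap (pd act X) f w \<alpha>" by (simp add: pd_map_eq)
  finally show "mMap (pd act X) (ccmp RG g f) v \<alpha> = mMap (pd act X) f (mMap (pd act X) g v) \<alpha>"
    by (simp add: w_def)
qed

lemma pd_is_mod: "is_mod RG (psc sc) (pd act X)"
  unfolding is_mod_def RG_ob
  by (intro conjI ballI allI;
      (rule pd_zero_mem pd_add_mem pd_neg_mem pd_scale_mem pd_map_mem pd_map_add pd_map_scale
        pd_map_id pd_map_comp pd_map_cadd pd_map_csmul; assumption))

lemma delta_mem: "a \<in> cOb R \<Longrightarrow> v \<in> mSp X a \<Longrightarrow> delta v \<in> mSp (pd act X) a"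
  by (auto simp: pd_space_iff delta_def mod_zero_mem[OF X] intro: finite_subset[of _ "{0}"])

lemma pd_map_delta:
  assumes xa: "x \<in> cOb R" "a \<in> cOb R" and f: "f \<in> cHom RG x a"
  shows "mMap (pd act X) f (delta v) \<alpha> = mMap X (f 0 \<alpha>) v"
proof -
  have "mMap (pd act X) f (delta v) \<alpha> = (\<Sum>\<beta>\<in>{0}. mMap X (f \<beta> \<alpha>) (delta v \<beta>))"
    by (rule pd_map_superset[OF xa f]) (auto simp: delta_def)
  then show ?thesis by (simp add: delta_def)
qed

lemma pd_map_orbit_ext_delta:
  assumes xy: "x \<in> cOb R" "y \<in> cOb R" and F: "\<And>\<alpha>. F \<alpha> \<in> cHom R (act \<alpha> x) y"
    and fin: "finite {\<alpha>. F \<alpha> \<noteq> czero R (act \<alpha> x) y}"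
  shows "mMap (pd act X) (orbit_ext F) (delta v) \<alpha> = mMap X (F \<alpha>) v"
  using pd_map_delta[OF xy orbit_ext_hom[OF xy F fin]] orbit_ext_row[of x y F \<alpha>, OF xy F] by simp

text \<open>If \<open>v\<^sub>1,\<dots>,v\<^sub>n\<close> span \<open>X\<close>, then \<open>\<delta>\<^sub>v\<^sub>1,\<dots>,\<delta>\<^sub>v\<^sub>n\<close> span \<open>P\<^sub>\<bullet>X\<close>: each summand
  \<open>w(\<alpha>)\<close> of \<open>w\<close> is a combination \<open>\<Sum>\<^sub>i X(F\<^sub>i \<alpha>)(v\<^sub>i)\<close>, and the finitely supported rows
  \<open>F\<^sub>i\<close> extend to \<open>R/G\<close>-morphisms.\<close>
lemma pd_spanned_by_delta:
  assumes gen: "\<forall>i<n. xs i \<in> cOb R \<and> vs i \<in> mSp X (xs i)"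
    and span: "\<forall>x\<in>cOb R. \<forall>w\<in>mSp X x. \<exists>fs. (\<forall>i<n. fs i \<in> cHom R x (xs i)) \<and>
         w = (\<Sum>i<n. mMap X (fs i) (vs i))"
    and x: "x \<in> cOb R" and w: "w \<in> mSp (pd act X) x"
  shows "\<exists>fs. (\<forall>i<n. fs i \<in> cHom RG x (xs i)) \<and> w = (\<Sum>i<n. mMap (pd act X) (fs i) (delta (vs i)))"
proof -
  have "\<forall>\<alpha>. \<exists>fs. (\<forall>i<n. fs i \<in> cHom R (act \<alpha> x) (xs i)) \<and> w \<alpha> = (\<Sum>i<n. mMap X (fs i) (vs i))"
    using span w x by (auto simp: pd_space_iff)
  then obtain FS where FS: "\<And>\<alpha>. (\<forall>i<n. FS \<alpha> i \<in> cHom R (act \<alpha> x) (xs i)) \<and>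
        w \<alpha> = (\<Sum>i<n. mMap X (FS \<alpha> i) (vs i))" by metis
  define S where "S = {\<alpha>. w \<alpha> \<noteq> 0}"
  have S: "finite S" using w by (simp add: pd_space_iff S_def)
  text \<open>The rows of coefficients, cut down to the finite support of \<open>w\<close>.\<close>
  define F where "F i \<alpha> = (if \<alpha> \<in> S then FS \<alpha> i else czero R (act \<alpha> x) (xs i))" for i \<alpha>
  have F: "\<And>\<alpha>. F i \<alpha> \<in> cHom R (act \<alpha> x) (xs i)" if "i < n" for i
    using FS that gen x czero_hom by (simp add: F_def)
  have Ffin: "finite {\<alpha>. F i \<alpha> \<noteq> czero R (act \<alpha> x) (xs i)}" for i
    using S by (rule finite_subset[rotated]) (auto simp: F_def)
  have w_row: "w \<alpha> = (\<Sum>i<n. mMap X (F i \<alpha>) (vs i))" for \<alpha>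
  proof (cases "\<alpha> \<in> S")
    case True
    then show ?thesis using FS by (simp add: F_def)
  next
    case False
    then show ?thesis using gen x mod_map_czero[OF X] by (simp add: F_def S_def)
  qed
  have ext: "orbit_ext (F i) \<in> cHom RG x (xs i)" if "i < n" for i
    by (rule orbit_ext_hom[OF x _ F[OF that] Ffin]) (use gen that in blast)
  have ext_delta: "mMap (pd act X) (orbit_ext (F i)) (delta (vs i)) \<alpha> = mMap X (F i \<alpha>) (vs i)"
    if "i < n" for i \<alpha>
    by (rule pd_map_orbit_ext_delta[OF x _ F[OF that] Ffin]) (use gen that in blast)
  have "w = (\<Sum>i<n. mMap (pd act X) (orbit_ext (F i)) (delta (vs i)))"
    by (simp add: fun_eq_iff sum_apply_fun ext_delta w_row)
  then show ?thesis using ext by (intro exI[of _ "\<lambda>i. orbit_ext (F i)"]) simp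
qed

lemma pd_fg:
  assumes fgX: "fg R X"
  shows "fg RG (pd act X)"
proof -
  obtain n :: nat and xs vs where gen: "\<forall>i<n. xs i \<in> cOb R \<and> vs i \<in> mSp X (xs i)"
    and span: "\<forall>x\<in>cOb R. \<forall>w\<in>mSp X x. \<exists>fs. (\<forall>i<n. fs i \<in> cHom R x (xs i)) \<and>
         w = (\<Sum>i<n. mMap X (fs i) (vs i))"
    using fgX unfolding fg_def by blast
  show ?thesis unfolding fg_def RG_ob
  proof (intro exI[of _ n] exI[of _ xs] exI[of _ "\<lambda>i. delta (vs i)"] conjI ballI)
    show "\<forall>i<n. xs i \<in> cOb R \<and> delta (vs i) \<in> mSp (pd act X) (xs i)"
      using gen delta_mem by blast
  qed (rule pd_spanned_by_delta[OF gen span])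
qed

lemma pd_modR: "modR R sc X \<Longrightarrow> modR RG (psc sc) (pd act X)"
  unfolding modR_def using pd_is_mod pd_fg by blast

end

lemma gact_space [simp]: "mSp (gact act actm \<mu> X) y = mSp X (act (- \<mu>) y)"
  by (simp add: gact_def)

lemma gact_map [simp]: "mMap (gact act actm \<mu> X) f = mMap X (actm (- \<mu>) f)"
  by (simp add: gact_def)

lemma act_minus_act_plus: "x \<in> cOb R \<Longrightarrow> act (- \<mu>) (act \<beta> x) = act (- \<mu> + \<beta>) x"
  by (simp add: act_plus)

lemma gact_is_mod:
  assumes X: "is_mod R sc X"
  shows "is_mod R sc (gact act actm \<mu> X)"
  unfolding is_mod_def gact_space gact_map
proof (intro conjI ballI allI)
  fix x y z f g v w c
  assume x: "x \<in> cOb R" and y: "y \<in> cOb R" and z: "z \<in> cOb R"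
  let ?A = "act (- \<mu>)" and ?f = "actm (- \<mu>) f" and ?g = "actm (- \<mu>) g"
  show "0 \<in> mSp X (?A x)" using mod_zero_mem[OF X] x by simp
  show "v \<in> mSp X (?A x) \<Longrightarrow> w \<in> mSp X (?A x) \<Longrightarrow> v + w \<in> mSp X (?A x)"
    using mod_add_mem[OF X] x by simp
  show "v \<in> mSp X (?A x) \<Longrightarrow> - v \<in> mSp X (?A x)" using mod_neg_mem[OF X] x by simp
  show "v \<in> mSp X (?A x) \<Longrightarrow> sc c v \<in> mSp X (?A x)" using mod_scale_mem[OF X] x by simp
  show "v \<in> mSp X (?A x) \<Longrightarrow> mMap X (actm (- \<mu>) (cid R x)) v = v"
    using mod_map_id[OF X] x by simp
  assume f: "f \<in> cHom R x y"
  have f': "?f \<in> cHom R (?A x) (?A y)" and xy': "?A x \<in> cOb R" "?A y \<in> cOb R"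
    using actm_hom[OF x y f] x y by auto
  show "v \<in> mSp X (?A y) \<Longrightarrow> mMap X ?f v \<in> mSp X (?A x)" by (rule mod_map_mem[OF X xy' f'])
  show "v \<in> mSp X (?A y) \<Longrightarrow> w \<in> mSp X (?A y) \<Longrightarrow> mMap X ?f (v + w) = mMap X ?f v + mMap X ?f w"
    by (rule mod_map_add[OF X xy' f'])
  show "v \<in> mSp X (?A y) \<Longrightarrow> mMap X ?f (sc c v) = sc c (mMap X ?f v)"
    by (rule mod_map_scale[OF X xy' f'])
  show "v \<in> mSp X (?A y) \<Longrightarrow> mMap X (actm (- \<mu>) (csmul R c f)) v = sc c (mMap X ?f v)"
    using actm_csmul[OF x y f] mod_map_csmul[OF X xy' f'] by simp
  show "g \<in> cHom R x y \<Longrightarrow> v \<in> mSp X (?A y) \<Longrightarrow>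
      mMap X (actm (- \<mu>) (cadd R f g)) v = mMap X ?f v + mMap X ?g v"
    using actm_cadd[OF x y f] mod_map_cadd[OF X xy' f' actm_hom[OF x y]] by simp
  show "g \<in> cHom R y z \<Longrightarrow> v \<in> mSp X (?A z) \<Longrightarrow>
      mMap X (actm (- \<mu>) (ccmp R g f)) v = mMap X ?f (mMap X ?g v)"
    using actm_ccmp[OF x y z f] mod_map_comp[OF X xy' _ f' actm_hom[OF y z]] z by simp
qed

lemma phi_apply:
  "x \<in> cOb R \<Longrightarrow> h \<in> mSp (pd act X) x \<Longrightarrow> phi R act \<mu> X x h = (\<lambda>\<beta>. h (- \<mu> + \<beta>))"
  by (simp add: phi_def)

lemma phi_outside: "\<not> (x \<in> cOb R \<and> h \<in> mSp (pd act X) x) \<Longrightarrow> phi R act \<mu> X x h = 0"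
  unfolding phi_def by auto

text \<open>Shifting the summands by \<open>\<mu>\<close> maps \<open>P\<^sub>\<bullet>Z\<close> into \<open>P\<^sub>\<bullet>W\<close> for any \<open>W\<close> with
  \<open>W(a) = Z(\<mu>\<inverse>a)\<close>; the two instances needed are \<open>W = \<^sup>\<mu>X\<close> and, for the inverse,
  \<open>Z = \<^sup>\<mu>X\<close>, \<open>W = X\<close>.\<close>
lemma shift_mem:
  assumes x: "x \<in> cOb R" and h: "h \<in> mSp (pd act Z) x"
    and W: "\<And>a. a \<in> cOb R \<Longrightarrow> mSp W a = mSp Z (act (- \<mu>) a)"
  shows "(\<lambda>\<beta>. h (- \<mu> + \<beta>)) \<in> mSp (pd act W) x"
  using h x by (simp add: pd_space_iff support_shift W act_minus_act_plus)

text \<open>Naturality of the shift: equivariance of \<open>f\<close> identifies the entry \<open>f\<^sub>\<gamma>\<^sub>,\<^sub>\<mu>\<^sub>\<inverse>\<^sub>\<beta>\<close>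
  with \<open>\<mu>\<inverse>(f\<^sub>\<mu>\<^sub>\<gamma>\<^sub>,\<^sub>\<beta>)\<close>, which acts on \<open>W\<close> as \<open>f\<^sub>\<mu>\<^sub>\<gamma>\<^sub>,\<^sub>\<beta>\<close> does.\<close>
lemma phi_shift_natural:
  assumes Z: "is_mod R sc Z"
    and W_map: "\<And>a b g. a \<in> cOb R \<Longrightarrow> b \<in> cOb R \<Longrightarrow> g \<in> cHom R a b \<Longrightarrow>
      mMap W g = mMap Z (actm (- \<mu>) g)"
    and x: "x \<in> cOb R" and y: "y \<in> cOb R" and f: "f \<in> cHom RG x y" and h: "h \<in> mSp (pd act Z) y"
  shows "phi R act \<mu> Z x (mMap (pd act Z) f h) = mMap (pd act W) f (phi R act \<mu> Z y h)"
proof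
  fix \<beta>
  have "phi R act \<mu> Z x (mMap (pd act Z) f h) \<beta> = (\<Sum>\<gamma>\<in>{\<gamma>. h \<gamma> \<noteq> 0}. mMap Z (f \<gamma> (- \<mu> + \<beta>)) (h \<gamma>))"
    using phi_apply[OF x pd_map_mem[OF Z x y f h]] by (simp add: pd_map_eq)
  also have "\<dots> = (\<Sum>\<gamma>\<in>{\<gamma>. h \<gamma> \<noteq> 0}. mMap W (f (\<mu> + \<gamma>) \<beta>) (h (- \<mu> + (\<mu> + \<gamma>))))"
    using RG_equivariant[OF f, of "- \<mu>" "\<mu> + _" \<beta>] W_map[OF act_ob[OF x] act_ob[OF y] RG_entry[OF f]]
    by simp
  also have "\<dots> = (\<Sum>\<gamma>\<in>(\<lambda>\<alpha>. \<mu> + \<alpha>) ` {\<gamma>. h \<gamma> \<noteq> 0}. mMap W (f \<gamma> \<beta>) (h (- \<mu> + \<gamma>)))"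
    by (rule sum.reindex[symmetric, unfolded comp_def]) simp
  also have "\<dots> = mMap (pd act W) f (phi R act \<mu> Z y h) \<beta>"
    using phi_apply[OF y h] by (simp add: pd_map_eq support_shift)
  finally show "phi R act \<mu> Z x (mMap (pd act Z) f h) \<beta> = mMap (pd act W) f (phi R act \<mu> Z y h) \<beta>" .
qed

lemma phi_modhom_shift:
  assumes Z: "is_mod R sc Z"
    and W: "\<And>a. a \<in> cOb R \<Longrightarrow> mSp W a = mSp Z (act (- \<mu>) a)"
    and W_map: "\<And>a b g. a \<in> cOb R \<Longrightarrow> b \<in> cOb R \<Longrightarrow> g \<in> cHom R a b \<Longrightarrow>
      mMap W g = mMap Z (actm (- \<mu>) g)"
  shows "phi R act \<mu> Z \<in> modhom RG (psc sc) (pd act Z) (pd act W)"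
  unfolding modhom_def RG_ob
proof (intro CollectI conjI ballI allI impI)
  fix x h assume x: "x \<in> cOb R" and h: "h \<in> mSp (pd act Z) x"
  show "phi R act \<mu> Z x h \<in> mSp (pd act W) x"
    using shift_mem[OF x h W] phi_apply[OF x h] by simp
next
  fix x v w c assume x: "x \<in> cOb R" and v: "v \<in> mSp (pd act Z) x" and w: "w \<in> mSp (pd act Z) x"
  show "phi R act \<mu> Z x (v + w) = phi R act \<mu> Z x v + phi R act \<mu> Z x w"
    unfolding phi_apply[OF x v] phi_apply[OF x w] phi_apply[OF x pd_add_mem[OF Z x v w]]
    by (simp add: fun_eq_iff)
  show "phi R act \<mu> Z x (psc sc c v) = psc sc c (phi R act \<mu> Z x v)"
    unfolding phi_apply[OF x v] phi_apply[OF x pd_scale_mem[OF Z x v]]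
    by (simp add: fun_eq_iff)
next
  fix x y f h assume x: "x \<in> cOb R" and y: "y \<in> cOb R" and f: "f \<in> cHom RG x y"
    and h: "h \<in> mSp (pd act Z) y"
  show "phi R act \<mu> Z x (mMap (pd act Z) f h) = mMap (pd act W) f (phi R act \<mu> Z y h)"
    by (rule phi_shift_natural[OF Z _ x y f h]) (rule W_map)
next
  fix x h assume "\<not> (x \<in> cOb R \<and> h \<in> mSp (pd act Z) x)"
  then show "phi R act \<mu> Z x h = 0" by (rule phi_outside)
qed

lemma phi_modhom:
  "is_mod R sc X \<Longrightarrow> phi R act \<mu> X \<in> modhom RG (psc sc) (pd act X) (pd act (gact act actm \<mu> X))"
  by (rule phi_modhom_shift) auto

lemma phi_inverse_modhom:
  assumes X: "is_mod R sc X"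
  shows "phi R act (- \<mu>) (gact act actm \<mu> X) \<in> modhom RG (psc sc) (pd act (gact act actm \<mu> X)) (pd act X)"
  by (rule phi_modhom_shift[OF gact_is_mod[OF X]]) (simp_all add: actm_plus[symmetric])

lemma phi_comp:
  "mcomp (cOb R) (pd act X) (phi R act \<beta> (gact act actm \<alpha> X)) (phi R act \<alpha> X) = phi R act (\<beta> + \<alpha>) X"
proof (rule ext, rule ext)
  fix x h
  show "mcomp (cOb R) (pd act X) (phi R act \<beta> (gact act actm \<alpha> X)) (phi R act \<alpha> X) x h =
      phi R act (\<beta> + \<alpha>) X x h"
  proof (cases "x \<in> cOb R \<and> h \<in> mSp (pd act X) x")
    case True
    then have x: "x \<in> cOb R" and h: "h \<in> mSp (pd act X) x" by auto
    have p: "(\<lambda>\<gamma>. h (- \<alpha> + \<gamma>)) \<in> mSp (pd act (gact act actm \<alpha> X)) x"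
      by (rule shift_mem[OF x h]) simp
    have "(\<lambda>\<gamma>. h (- \<alpha> + (- \<beta> + \<gamma>))) = (\<lambda>\<gamma>. h (- (\<beta> + \<alpha>) + \<gamma>))"
      by (simp only: minus_add add.assoc)
    then show ?thesis using True
      unfolding mcomp_def phi_apply[OF x h] phi_apply[OF x p] by simp
  next
    case False
    then show ?thesis unfolding mcomp_def by (simp only: if_False phi_outside[OF False])
  qed
qed

lemma phi_zero: "phi R act 0 X = mid (cOb R) (pd act X)"
  by (auto simp: phi_def mid_def fun_eq_iff)

lemma phi_inverse:
  "mcomp (cOb R) (pd act X) (phi R act (- \<mu>) (gact act actm \<mu> X)) (phi R act \<mu> X) = mid (cOb R) (pd act X)"
  "mcomp (cOb R) (pd act (gact act actm \<mu> X)) (phi R act \<mu> X) (phi R act (- \<mu>) (gact act actm \<mu> X))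
     = mid (cOb R) (pd act (gact act actm \<mu> X))"
proof -
  show "mcomp (cOb R) (pd act X) (phi R act (- \<mu>) (gact act actm \<mu> X)) (phi R act \<mu> X) = mid (cOb R) (pd act X)"
    by (simp add: phi_comp phi_zero)
  have "mcomp (cOb R) (pd act (gact act actm \<mu> X)) (phi R act \<mu> X) (phi R act (- \<mu>) (gact act actm \<mu> X)) x h
      = mid (cOb R) (pd act (gact act actm \<mu> X)) x h" for x h
  proof (cases "x \<in> cOb R \<and> h \<in> mSp (pd act (gact act actm \<mu> X)) x")
    case True
    then have x: "x \<in> cOb R" and h: "h \<in> mSp (pd act (gact act actm \<mu> X)) x" by auto
    have p: "(\<lambda>\<gamma>. h (- (- \<mu>) + \<gamma>)) \<in> mSp (pd act X) x"
      by (rule shift_mem[OF x h]) simp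
    show ?thesis using True p unfolding mcomp_def mid_def phi_apply[OF x h] phi_apply[OF x p]
      by (simp add: add.assoc[symmetric])
  next
    case False
    then show ?thesis unfolding mcomp_def mid_def by (simp only: if_False)
  qed
  then show "mcomp (cOb R) (pd act (gact act actm \<mu> X)) (phi R act \<mu> X) (phi R act (- \<mu>) (gact act actm \<mu> X))
     = mid (cOb R) (pd act (gact act actm \<mu> X))" by (intro ext) simp
qed

lemma pdm_apply:
  "x \<in> cOb R \<Longrightarrow> h \<in> mSp (pd act X) x \<Longrightarrow> pdm R act X u x h = (\<lambda>\<alpha>. u (act \<alpha> x) (h \<alpha>))"
  by (simp add: pdm_def)

lemma pdm_mem:
  assumes u: "u \<in> modhom R sc X Y" and X: "is_mod R sc X"
    and x: "x \<in> cOb R" and h: "h \<in> mSp (pd act X) x"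
  shows "(\<lambda>\<alpha>. u (act \<alpha> x) (h \<alpha>)) \<in> mSp (pd act Y) x"
proof -
  have "{\<alpha>. u (act \<alpha> x) (h \<alpha>) \<noteq> 0} \<subseteq> {\<alpha>. h \<alpha> \<noteq> 0}"
    using modhom_zero[OF u X] by auto
  then show ?thesis using h x modhom_mem[OF u] by (auto simp: pd_space_iff intro: finite_subset)
qed

text \<open>\<open>P\<^sub>\<bullet>u\<close> commutes with the action of \<open>R/G\<close>-morphisms, entrywise by naturality of \<open>u\<close>.\<close>
lemma pdm_natural:
  assumes X: "is_mod R sc X" and Y: "is_mod R sc Y" and u: "u \<in> modhom R sc X Y"
    and x: "x \<in> cOb R" and y: "y \<in> cOb R" and f: "f \<in> cHom RG x y" and h: "h \<in> mSp (pd act X) y"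
  shows "pdm R act X u x (mMap (pd act X) f h) = mMap (pd act Y) f (pdm R act X u y h)"
proof -
  have hs: "\<And>\<beta>. h \<beta> \<in> mSp X (act \<beta> y)" and S: "finite {\<beta>. h \<beta> \<noteq> 0}"
    using h by (auto simp: pd_space_iff)
  have natural: "u (act \<alpha> x) (mMap (pd act X) f h \<alpha>) =
      mMap (pd act Y) f (\<lambda>\<beta>. u (act \<beta> y) (h \<beta>)) \<alpha>" for \<alpha>
  proof -
    have "u (act \<alpha> x) (mMap (pd act X) f h \<alpha>) =
        (\<Sum>\<beta>\<in>{\<beta>. h \<beta> \<noteq> 0}. u (act \<alpha> x) (mMap X (f \<beta> \<alpha>) (h \<beta>)))"
      unfolding pd_map_eq using x hs entry_map(2)[OF X f x y] by (intro modhom_sum[OF u X]) auto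
    also have "\<dots> = (\<Sum>\<beta>\<in>{\<beta>. h \<beta> \<noteq> 0}. mMap Y (f \<beta> \<alpha>) (u (act \<beta> y) (h \<beta>)))"
      using modhom_natural[OF u _ _ RG_entry[OF f] hs] x y by simp
    also have "\<dots> = mMap (pd act Y) f (\<lambda>\<beta>. u (act \<beta> y) (h \<beta>)) \<alpha>"
      using modhom_zero[OF u X] by (intro pd_map_superset[OF Y x y f S, symmetric]) auto
    finally show ?thesis .
  qed
  then show ?thesis
    unfolding pdm_apply[OF x pd_map_mem[OF X x y f h]] pdm_apply[OF y h] by (simp add: fun_eq_iff)
qed

lemma pdm_modhom:
  assumes X: "is_mod R sc X" and Y: "is_mod R sc Y" and u: "u \<in> modhom R sc X Y"
  shows "pdm R act X u \<in> modhom RG (psc sc) (pd act X) (pd act Y)"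
  unfolding modhom_def RG_ob
proof (intro CollectI conjI ballI allI impI)
  fix x h assume x: "x \<in> cOb R" and h: "h \<in> mSp (pd act X) x"
  show "pdm R act X u x h \<in> mSp (pd act Y) x" using pdm_mem[OF u X x h] pdm_apply[OF x h] by simp
next
  fix x v w c assume x: "x \<in> cOb R" and v: "v \<in> mSp (pd act X) x" and w: "w \<in> mSp (pd act X) x"
  have vs: "\<And>\<alpha>. v \<alpha> \<in> mSp X (act \<alpha> x)" "\<And>\<alpha>. w \<alpha> \<in> mSp X (act \<alpha> x)"
    using v w by (auto simp: pd_space_iff)
  show "pdm R act X u x (v + w) = pdm R act X u x v + pdm R act X u x w"
    unfolding pdm_apply[OF x v] pdm_apply[OF x w] pdm_apply[OF x pd_add_mem[OF X x v w]]
    using modhom_add[OF u _ vs] x by (simp add: fun_eq_iff)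
  show "pdm R act X u x (psc sc c v) = psc sc c (pdm R act X u x v)"
    unfolding pdm_apply[OF x v] pdm_apply[OF x pd_scale_mem[OF X x v]]
    using modhom_scale[OF u _ vs(1)] x by (simp add: fun_eq_iff)
next
  fix x y f h assume "x \<in> cOb R" "y \<in> cOb R" "f \<in> cHom RG x y" "h \<in> mSp (pd act X) y"
  then show "pdm R act X u x (mMap (pd act X) f h) = mMap (pd act Y) f (pdm R act X u y h)"
    by (rule pdm_natural[OF X Y u])
next
  fix x h assume "\<not> (x \<in> cOb R \<and> h \<in> mSp (pd act X) x)"
  then show "pdm R act X u x h = 0" unfolding pdm_def by (simp only: if_False)
qed

lemma phi_natural:
  assumes X: "is_mod R sc X" and u: "u \<in> modhom R sc X X'"
  shows "mcomp (cOb R) (pd act X) (pdm R act (gact act actm \<mu> X) (gactm R act \<mu> u)) (phi R act \<mu> X)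
     = mcomp (cOb R) (pd act X) (phi R act \<mu> X') (pdm R act X u)"
proof (rule ext, rule ext)
  fix x h
  show "mcomp (cOb R) (pd act X) (pdm R act (gact act actm \<mu> X) (gactm R act \<mu> u)) (phi R act \<mu> X) x h
     = mcomp (cOb R) (pd act X) (phi R act \<mu> X') (pdm R act X u) x h"
  proof (cases "x \<in> cOb R \<and> h \<in> mSp (pd act X) x")
    case True
    then have x: "x \<in> cOb R" and h: "h \<in> mSp (pd act X) x" by auto
    have p: "(\<lambda>\<gamma>. h (- \<mu> + \<gamma>)) \<in> mSp (pd act (gact act actm \<mu> X)) x"
      by (rule shift_mem[OF x h]) simp
    have q: "(\<lambda>\<alpha>. u (act \<alpha> x) (h \<alpha>)) \<in> mSp (pd act X') x" by (rule pdm_mem[OF u X x h])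
    show ?thesis using x h p q
      unfolding mcomp_def phi_apply[OF x h] phi_apply[OF x q] pdm_apply[OF x h] pdm_apply[OF x p]
      by (simp add: gactm_def act_minus_act_plus)
  next
    case False
    then show ?thesis unfolding mcomp_def by (simp only: if_False)
  qed
qed

abbreviation supp_fam :: "('g \<Rightarrow> 'o \<Rightarrow> 'v \<Rightarrow> 'v) \<Rightarrow> 'g set" where
  "supp_fam fam \<equiv> {\<alpha>. fam \<alpha> \<noteq> (\<lambda>_ _. 0)}"

lemma dsumD:
  assumes "fam \<in> dsum R act actm sc X Y"
  shows "fam \<alpha> \<in> modhom R sc (gact act actm \<alpha> X) Y" "finite (supp_fam fam)"
  using assms by (auto simp: dsum_def)

lemma F1_eq_sum:
  "F1 R act actm X fam =
    (\<Sum>\<alpha>\<in>supp_fam fam. mcomp (cOb R) (pd act X) (pdm R act (gact act actm \<alpha> X) (fam \<alpha>)) (phi R act \<alpha> X))"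
  unfolding F1_def by (simp add: fun_eq_iff sum_apply_fun)

lemma F1_modhom:
  assumes X: "is_mod R sc X" and Y: "is_mod R sc Y" and fam: "fam \<in> dsum R act actm sc X Y"
  shows "F1 R act actm X fam \<in> modhom RG (psc sc) (pd act X) (pd act Y)"
  unfolding F1_eq_sum
proof (rule modhom_sum_closed[OF module_psc pd_is_mod[OF Y] dsumD(2)[OF fam]])
  fix \<alpha>
  show "mcomp (cOb R) (pd act X) (pdm R act (gact act actm \<alpha> X) (fam \<alpha>)) (phi R act \<alpha> X)
      \<in> modhom RG (psc sc) (pd act X) (pd act Y)"
    using modhom_comp[OF pd_is_mod[OF X] phi_modhom[OF X]
        pdm_modhom[OF gact_is_mod[OF X] Y dsumD(1)[OF fam]]]
    by simp
qed

lemma F1_apply: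
  assumes x: "x \<in> cOb R" and h: "h \<in> mSp (pd act X) x"
  shows "F1 R act actm X fam x h = (\<lambda>\<gamma>. \<Sum>\<alpha>\<in>supp_fam fam. fam \<alpha> (act \<gamma> x) (h (- \<alpha> + \<gamma>)))"
proof -
  have "mcomp (cOb R) (pd act X) (pdm R act (gact act actm \<alpha> X) (fam \<alpha>)) (phi R act \<alpha> X) x h =
      (\<lambda>\<gamma>. fam \<alpha> (act \<gamma> x) (h (- \<alpha> + \<gamma>)))" for \<alpha>
  proof -
    have "(\<lambda>\<gamma>. h (- \<alpha> + \<gamma>)) \<in> mSp (pd act (gact act actm \<alpha> X)) x"
      by (rule shift_mem[OF x h]) simp
    then show ?thesis using x h unfolding mcomp_def phi_apply[OF x h] by (simp add: pdm_def)
  qed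
  then show ?thesis unfolding F1_def by (simp add: fun_eq_iff sum_apply_fun)
qed

lemma F1_outside:
  "\<not> (x \<in> cOb R \<and> h \<in> mSp (pd act X) x) \<Longrightarrow> F1 R act actm X fam x h = 0"
  unfolding F1_def mcomp_def by (simp only: if_False sum.neutral_const)

context
  fixes X Y assumes X: "is_mod R sc X" and Y: "is_mod R sc Y"
begin

lemma F1_delta:
  assumes fam: "fam \<in> dsum R act actm sc X Y" and x: "x \<in> cOb R" and w: "w \<in> mSp X x"
  shows "F1 R act actm X fam x (delta w) \<gamma> = fam \<gamma> (act \<gamma> x) w"
proof -
  have "F1 R act actm X fam x (delta w) \<gamma> =
      (\<Sum>\<alpha>\<in>supp_fam fam. fam \<alpha> (act \<gamma> x) (delta w (- \<alpha> + \<gamma>)))"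
    using F1_apply[OF x delta_mem[OF X x w]] by simp
  also have "\<dots> = fam \<gamma> (act \<gamma> x) (delta w (- \<gamma> + \<gamma>))"
  proof (rule sum_eq_single[OF dsumD(2)[OF fam]])
    fix \<alpha> assume "\<alpha> \<noteq> \<gamma>"
    then have "delta w (- \<alpha> + \<gamma>) = 0" by (simp add: delta_def eq_neg_iff_add_eq_0[symmetric])
    then show "fam \<alpha> (act \<gamma> x) (delta w (- \<alpha> + \<gamma>)) = 0"
      using modhom_zero[OF dsumD(1)[OF fam] gact_is_mod[OF X]] by simp
  qed simp
  finally show ?thesis by (simp add: delta_def)
qed

lemma F1_inj:
  assumes fam: "fam \<in> dsum R act actm sc X Y" and fam': "fam' \<in> dsum R act actm sc X Y"
    and eq: "F1 R act actm X fam = F1 R act actm X fam'"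
  shows "fam = fam'"
proof (intro ext)
  fix \<alpha> y w
  show "fam \<alpha> y w = fam' \<alpha> y w"
  proof (cases "y \<in> cOb R \<and> w \<in> mSp X (act (- \<alpha>) y)")
    case True
    then have y: "y \<in> cOb R" and w: "w \<in> mSp X (act (- \<alpha>) y)" by auto
    have "fam \<alpha> y w = F1 R act actm X fam (act (- \<alpha>) y) (delta w) \<alpha>"
      using F1_delta[OF fam act_ob[OF y] w] y by simp
    also have "\<dots> = fam' \<alpha> y w"
      using F1_delta[OF fam' act_ob[OF y] w] y eq by simp
    finally show ?thesis .
  next
    case False
    then show ?thesis
      using modhom_outside[OF dsumD(1)[OF fam]] modhom_outside[OF dsumD(1)[OF fam']] by simp
  qed
qed

end

context
  fixes Z assumes Z: "is_mod R sc Z"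
begin

lemma Pmor_map:
  assumes ab: "a \<in> cOb R" "b \<in> cOb R" and g: "g \<in> cHom R a b" and k: "k \<in> mSp (pd act Z) b"
  shows "mMap (pd act Z) (Pmor a b g) k \<alpha> = mMap Z (actm \<alpha> g) (k \<alpha>)"
proof -
  let ?S = "{\<beta>. k \<beta> \<noteq> 0} \<union> {\<alpha>}"
  have S: "finite ?S" and ks: "\<And>\<beta>. k \<beta> \<in> mSp Z (act \<beta> b)" using k by (auto simp: pd_space_iff)
  have "mMap (pd act Z) (Pmor a b g) k \<alpha> = (\<Sum>\<beta>\<in>?S. mMap Z (Pmor a b g \<beta> \<alpha>) (k \<beta>))"
    by (rule pd_map_superset[OF Z ab Pmor_hom[OF ab g] S]) auto
  also have "\<dots> = mMap Z (Pmor a b g \<alpha> \<alpha>) (k \<alpha>)"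
  proof (rule sum_eq_single[OF S])
    fix \<beta> assume "\<beta> \<noteq> \<alpha>"
    then have "Pmor a b g \<beta> \<alpha> = czero R (act \<alpha> a) (act \<beta> b)"
      using ab by (simp add: Pmor_def orbit_ext_def act_plus[symmetric] add.assoc[symmetric]
          eq_neg_iff_add_eq_0[symmetric])
    then show "mMap Z (Pmor a b g \<beta> \<alpha>) (k \<beta>) = 0" using mod_map_czero[OF Z] ab ks by simp
  qed simp
  also have "\<dots> = mMap Z (actm \<alpha> g) (k \<alpha>)" by (simp add: Pmor_def orbit_ext_def)
  finally show ?thesis .
qed

lemma Pmor_delta:
  assumes ab: "a \<in> cOb R" "b \<in> cOb R" and g: "g \<in> cHom R a b" and w: "w \<in> mSp Z b"
  shows "mMap (pd act Z) (Pmor a b g) (delta w) = delta (mMap Z g w)"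
  using Pmor_map[OF ab g delta_mem[OF Z ab(2) w]] ab g
    mod_map_zero[OF Z act_ob[OF ab(1)] act_ob[OF ab(2)] actm_hom[OF ab g]]
  by (auto simp: delta_def fun_eq_iff)

lemma shift_mor_map:
  assumes x: "x \<in> cOb R" and k: "k \<in> mSp (pd act Z) (act \<alpha> x)"
  shows "mMap (pd act Z) (shift_mor x \<alpha>) k \<gamma> = k (\<gamma> + - \<alpha>)"
proof -
  let ?b = "\<gamma> + - \<alpha>"
  let ?S = "{\<beta>. k \<beta> \<noteq> 0} \<union> {?b}"
  have S: "finite ?S" and ks: "\<And>\<beta>. k \<beta> \<in> mSp Z (act \<beta> (act \<alpha> x))"
    using k by (auto simp: pd_space_iff)
  have b: "- ?b + \<gamma> = \<alpha>" by (simp add: minus_add add.assoc)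
  have "mMap (pd act Z) (shift_mor x \<alpha>) k \<gamma> = (\<Sum>\<beta>\<in>?S. mMap Z (shift_mor x \<alpha> \<beta> \<gamma>) (k \<beta>))"
    by (rule pd_map_superset[OF Z x act_ob[OF x] shift_mor_hom[OF x] S]) auto
  also have "\<dots> = mMap Z (shift_mor x \<alpha> ?b \<gamma>) (k ?b)"
  proof (rule sum_eq_single[OF S])
    fix \<beta> assume "\<beta> \<noteq> ?b"
    then have "- \<beta> + \<gamma> \<noteq> \<alpha>" by (metis add.assoc add_minus_cancel add.right_inverse add.right_neutral)
    then have "shift_mor x \<alpha> \<beta> \<gamma> = czero R (act \<gamma> x) (act \<beta> (act \<alpha> x))"
      using x by (simp add: shift_mor_def orbit_ext_def act_minus_act_plus act_plus[symmetric])
    then show "mMap Z (shift_mor x \<alpha> \<beta> \<gamma>) (k \<beta>) = 0" using mod_map_czero[OF Z] x ks by simp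
  qed simp
  also have "\<dots> = k ?b"
    using x b mod_map_id[OF Z act_ob[OF act_ob[OF x]] ks] by (simp add: shift_mor_def orbit_ext_def)
  finally show ?thesis .
qed

lemma pd_delta_decomposition:
  assumes x: "x \<in> cOb R" and h: "h \<in> mSp (pd act Z) x"
  shows "h = (\<Sum>\<alpha>\<in>{\<alpha>. h \<alpha> \<noteq> 0}. mMap (pd act Z) (shift_mor x \<alpha>) (delta (h \<alpha>)))"
proof
  fix \<gamma>
  have S: "finite {\<alpha>. h \<alpha> \<noteq> 0}" and hs: "\<And>\<alpha>. h \<alpha> \<in> mSp Z (act \<alpha> x)"
    using h by (auto simp: pd_space_iff)
  have "(\<Sum>\<alpha>\<in>{\<alpha>. h \<alpha> \<noteq> 0}. mMap (pd act Z) (shift_mor x \<alpha>) (delta (h \<alpha>))) \<gamma> =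
      (\<Sum>\<alpha>\<in>{\<alpha>. h \<alpha> \<noteq> 0}. delta (h \<alpha>) (\<gamma> + - \<alpha>))"
    unfolding sum_apply_fun using shift_mor_map[OF x delta_mem[OF Z act_ob[OF x] hs]] by simp
  also have "\<dots> = h \<gamma>"
    by (subst sum_eq_single[OF S, of \<gamma>]) (auto simp: delta_def)
  finally show "h \<gamma> = (\<Sum>\<alpha>\<in>{\<alpha>. h \<alpha> \<noteq> 0}. mMap (pd act Z) (shift_mor x \<alpha>) (delta (h \<alpha>))) \<gamma>"
    by simp
qed

end

text \<open>The inverse of \<open>F\<^sup>(\<^sup>1\<^sup>)\<close>: a morphism \<open>U : P\<^sub>\<bullet>X \<rightarrow> P\<^sub>\<bullet>Y\<close> determines the family
  \<open>f\<^sub>\<alpha> : \<^sup>\<alpha>X \<rightarrow> Y\<close>, \<open>f\<^sub>\<alpha>(y)(w) = U(\<alpha>\<inverse>y)(\<delta>\<^sub>w)\<^sub>\<alpha>\<close>.\<close>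
definition fam_of :: "('o, 'a, 'v) cmod \<Rightarrow> ('o \<Rightarrow> ('g \<Rightarrow> 'v) \<Rightarrow> 'g \<Rightarrow> 'v) \<Rightarrow> 'g \<Rightarrow> 'o \<Rightarrow> 'v \<Rightarrow> 'v" where
  "fam_of X U \<alpha> y w =
    (if y \<in> cOb R \<and> w \<in> mSp X (act (- \<alpha>) y) then U (act (- \<alpha>) y) (delta w) \<alpha> else 0)"

context
  fixes X Y U assumes X: "is_mod R sc X" and Y: "is_mod R sc Y"
    and U: "U \<in> modhom RG (psc sc) (pd act X) (pd act Y)"
begin

lemmas U_mem = modhom_mem[OF U, unfolded RG_ob]
lemmas U_natural = modhom_natural[OF U, unfolded RG_ob]
lemmas U_sum = modhom_sum[OF U pd_is_mod[OF X], unfolded RG_ob]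
lemmas U_outside = modhom_outside[OF U, unfolded RG_ob]

lemma fam_of_apply:
  "y \<in> cOb R \<Longrightarrow> w \<in> mSp X (act (- \<alpha>) y) \<Longrightarrow> fam_of X U \<alpha> y w = U (act (- \<alpha>) y) (delta w) \<alpha>"
  by (simp add: fam_of_def)

text \<open>Naturality of \<open>f\<^sub>\<alpha>\<close> comes from naturality of \<open>U\<close> with respect to the morphisms \<open>P(g)\<close>.\<close>
lemma fam_of_natural:
  assumes y: "y \<in> cOb R" and z: "z \<in> cOb R" and g: "g \<in> cHom R y z"
    and w: "w \<in> mSp X (act (- \<alpha>) z)"
  shows "fam_of X U \<alpha> y (mMap X (actm (- \<alpha>) g) w) = mMap Y g (fam_of X U \<alpha> z w)"
proof -
  let ?a = "act (- \<alpha>) y" and ?b = "act (- \<alpha>) z" and ?g = "actm (- \<alpha>) g"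
  have ab: "?a \<in> cOb R" "?b \<in> cOb R" using y z by auto
  have g': "?g \<in> cHom R ?a ?b" by (rule actm_hom[OF y z g])
  have "fam_of X U \<alpha> y (mMap X ?g w) = U ?a (delta (mMap X ?g w)) \<alpha>"
    by (rule fam_of_apply[OF y mod_map_mem[OF X ab g' w]])
  also have "\<dots> = U ?a (mMap (pd act X) (Pmor ?a ?b ?g) (delta w)) \<alpha>"
    using Pmor_delta[OF X ab g' w] by simp
  also have "\<dots> = mMap (pd act Y) (Pmor ?a ?b ?g) (U ?b (delta w)) \<alpha>"
    using U_natural[OF ab Pmor_hom[OF ab g'] delta_mem[OF X ab(2) w]] by simp
  also have "\<dots> = mMap Y (actm \<alpha> ?g) (U ?b (delta w) \<alpha>)"
    by (rule Pmor_map[OF Y ab g' U_mem[OF ab(2) delta_mem[OF X ab(2) w]]])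
  also have "\<dots> = mMap Y g (fam_of X U \<alpha> z w)"
    using fam_of_apply[OF z w] actm_plus[OF y z g, of \<alpha> "- \<alpha>"] y z g by simp
  finally show ?thesis .
qed

lemma fam_of_modhom: "fam_of X U \<alpha> \<in> modhom R sc (gact act actm \<alpha> X) Y"
  unfolding modhom_def gact_space gact_map
proof (intro CollectI conjI ballI allI impI)
  fix y w assume y: "y \<in> cOb R" and w: "w \<in> mSp X (act (- \<alpha>) y)"
  have "U (act (- \<alpha>) y) (delta w) \<in> mSp (pd act Y) (act (- \<alpha>) y)"
    by (rule U_mem[OF act_ob[OF y] delta_mem[OF X act_ob[OF y] w]])
  then have "U (act (- \<alpha>) y) (delta w) \<alpha> \<in> mSp Y (act \<alpha> (act (- \<alpha>) y))"
    by (simp add: pd_space_iff)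
  then show "fam_of X U \<alpha> y w \<in> mSp Y y" using fam_of_apply[OF y w] y by simp
next
  fix y v w c assume y: "y \<in> cOb R" and v: "v \<in> mSp X (act (- \<alpha>) y)" and w: "w \<in> mSp X (act (- \<alpha>) y)"
  let ?a = "act (- \<alpha>) y"
  have a: "?a \<in> cOb R" using y by simp
  show "fam_of X U \<alpha> y (v + w) = fam_of X U \<alpha> y v + fam_of X U \<alpha> y w"
    using fam_of_apply[OF y] v w mod_add_mem[OF X a v w]
      modhom_add[OF U, unfolded RG_ob, OF a delta_mem[OF X a v] delta_mem[OF X a w]]
    by (simp add: delta_add)
  show "fam_of X U \<alpha> y (sc c v) = sc c (fam_of X U \<alpha> y v)"
    using fam_of_apply[OF y] v mod_scale_mem[OF X a v]
      modhom_scale[OF U, unfolded RG_ob, OF a delta_mem[OF X a v]]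
    by (simp add: delta_scale)
next
  fix y z g w assume "y \<in> cOb R" "z \<in> cOb R" "g \<in> cHom R y z" "w \<in> mSp X (act (- \<alpha>) z)"
  then show "fam_of X U \<alpha> y (mMap X (actm (- \<alpha>) g) w) = mMap Y g (fam_of X U \<alpha> z w)"
    by (rule fam_of_natural)
next
  fix y w assume "\<not> (y \<in> cOb R \<and> w \<in> mSp X (act (- \<alpha>) y))"
  then show "fam_of X U \<alpha> y w = 0" unfolding fam_of_def by (simp only: if_False)
qed

lemma U_delta_combination:
  assumes a: "a \<in> cOb R" and gen: "\<forall>i<n. xs i \<in> cOb R \<and> vs i \<in> mSp X (xs i)"
    and gs: "\<forall>i<n. gs i \<in> cHom R a (xs i)"
  shows "U a (delta (\<Sum>i<n. mMap X (gs i) (vs i))) \<alpha> =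
    (\<Sum>i<n. mMap Y (actm \<alpha> (gs i)) (U (xs i) (delta (vs i)) \<alpha>))"
proof -
  have P: "Pmor a (xs i) (gs i) \<in> cHom RG a (xs i)" if "i < n" for i
    using Pmor_hom[OF a] gen gs that by blast
  have "delta (\<Sum>i<n. mMap X (gs i) (vs i)) = (\<Sum>i<n. mMap (pd act X) (Pmor a (xs i) (gs i)) (delta (vs i)))"
    unfolding delta_sum using Pmor_delta[OF X a] gen gs by simp
  moreover have "mMap (pd act X) (Pmor a (xs i) (gs i)) (delta (vs i)) \<in> mSp (pd act X) a"
    if "i < n" for i
    using pd_map_mem[OF X a _ P[OF that] delta_mem[OF X]] gen that by blast
  ultimately have "U a (delta (\<Sum>i<n. mMap X (gs i) (vs i))) =
      (\<Sum>i<n. U a (mMap (pd act X) (Pmor a (xs i) (gs i)) (delta (vs i))))"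
    using U_sum[OF a, of "{..<n}"] by simp
  also have "\<dots> = (\<Sum>i<n. mMap (pd act Y) (Pmor a (xs i) (gs i)) (U (xs i) (delta (vs i))))"
    using U_natural[OF a _ P delta_mem[OF X]] gen by simp
  finally show ?thesis
    unfolding sum_apply_fun using Pmor_map[OF Y a _ _ U_mem[OF _ delta_mem[OF X]]] gen gs by simp
qed

text \<open>For finitely generated \<open>X\<close> only finitely many \<open>f\<^sub>\<alpha>\<close> are non-zero: \<open>f\<^sub>\<alpha> \<noteq> 0\<close> forces
  \<open>U(\<delta>\<^bsub>v\<^sub>i\<^esub>)\<^sub>\<alpha> \<noteq> 0\<close> for one of the generators \<open>v\<^sub>i\<close>.\<close>
lemma fam_of_finite:
  assumes fgX: "fg R X"
  shows "finite (supp_fam (fam_of X U))"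
proof -
  obtain n :: nat and xs vs where gen: "\<forall>i<n. xs i \<in> cOb R \<and> vs i \<in> mSp X (xs i)"
    and span: "\<forall>x\<in>cOb R. \<forall>w\<in>mSp X x. \<exists>fs. (\<forall>i<n. fs i \<in> cHom R x (xs i)) \<and>
         w = (\<Sum>i<n. mMap X (fs i) (vs i))"
    using fgX unfolding fg_def by blast
  let ?T = "\<Union>i<n. {\<alpha>. U (xs i) (delta (vs i)) \<alpha> \<noteq> 0}"
  have "finite {\<alpha>. U (xs i) (delta (vs i)) \<alpha> \<noteq> 0}" if "i < n" for i
    using U_mem[OF _ delta_mem[OF X]] gen that by (simp add: pd_space_iff)
  then have fin: "finite ?T" by simp
  have "supp_fam (fam_of X U) \<subseteq> ?T"
  proof
    fix \<alpha> assume "\<alpha> \<in> supp_fam (fam_of X U)"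
    then obtain y w where nz: "fam_of X U \<alpha> y w \<noteq> 0" by (auto simp: fun_eq_iff)
    then have y: "y \<in> cOb R" and w: "w \<in> mSp X (act (- \<alpha>) y)"
      by (auto simp: fam_of_def split: if_splits)
    obtain gs where gs: "\<forall>i<n. gs i \<in> cHom R (act (- \<alpha>) y) (xs i)"
      and w_eq: "w = (\<Sum>i<n. mMap X (gs i) (vs i))"
      using span w y by (meson act_ob)
    have "(\<Sum>i<n. mMap Y (actm \<alpha> (gs i)) (U (xs i) (delta (vs i)) \<alpha>)) \<noteq> 0"
      using nz fam_of_apply[OF y w] U_delta_combination[OF act_ob[OF y] gen gs] w_eq by simp
    then obtain i where i: "i < n" "mMap Y (actm \<alpha> (gs i)) (U (xs i) (delta (vs i)) \<alpha>) \<noteq> 0"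
      by (auto dest: sum.not_neutral_contains_not_neutral)
    moreover have "mMap Y (actm \<alpha> (gs i)) 0 = 0"
      using mod_map_zero[OF Y _ _ actm_hom] gen gs i(1) y by (metis act_ob)
    ultimately show "\<alpha> \<in> ?T" by fastforce
  qed
  then show ?thesis using fin finite_subset by blast
qed

lemma fam_of_dsum: "fg R X \<Longrightarrow> fam_of X U \<in> dsum R act actm sc X Y"
  unfolding dsum_def using fam_of_modhom fam_of_finite by blast

lemma U_value:
  assumes x: "x \<in> cOb R" and h: "h \<in> mSp (pd act X) x"
  shows "U x h \<gamma> = (\<Sum>\<alpha>\<in>{\<alpha>. h \<alpha> \<noteq> 0}. U (act \<alpha> x) (delta (h \<alpha>)) (\<gamma> + - \<alpha>))"
proof -
  have hs: "\<And>\<alpha>. h \<alpha> \<in> mSp X (act \<alpha> x)" using h by (simp add: pd_space_iff)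
  have dh: "\<And>\<alpha>. delta (h \<alpha>) \<in> mSp (pd act X) (act \<alpha> x)" using delta_mem[OF X act_ob[OF x] hs] .
  have "U x h = U x (\<Sum>\<alpha>\<in>{\<alpha>. h \<alpha> \<noteq> 0}. mMap (pd act X) (shift_mor x \<alpha>) (delta (h \<alpha>)))"
    using pd_delta_decomposition[OF X x h] by simp
  also have "\<dots> = (\<Sum>\<alpha>\<in>{\<alpha>. h \<alpha> \<noteq> 0}. U x (mMap (pd act X) (shift_mor x \<alpha>) (delta (h \<alpha>))))"
    by (rule U_sum[OF x pd_map_mem[OF X x act_ob[OF x] shift_mor_hom[OF x] dh]])
  also have "\<dots> = (\<Sum>\<alpha>\<in>{\<alpha>. h \<alpha> \<noteq> 0}. mMap (pd act Y) (shift_mor x \<alpha>) (U (act \<alpha> x) (delta (h \<alpha>))))"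
    using U_natural[OF x act_ob[OF x] shift_mor_hom[OF x] dh] by simp
  finally show ?thesis
    unfolding sum_apply_fun using shift_mor_map[OF Y x U_mem[OF act_ob[OF x] dh]] by simp
qed

text \<open>\<open>F\<^sup>(\<^sup>1\<^sup>)\<close> maps the family read off from \<open>U\<close> back to \<open>U\<close>: reindexing the sum in
  \<open>U_value\<close> by \<open>\<alpha> = \<gamma>\<alpha>'\<^sup>-\<^sup>1\<close> gives the defining sum of \<open>F\<^sup>(\<^sup>1\<^sup>)\<close>.\<close>
lemma F1_fam_of_apply:
  assumes fgX: "fg R X" and x: "x \<in> cOb R" and h: "h \<in> mSp (pd act X) x"
  shows "F1 R act actm X (fam_of X U) x h \<gamma> = U x h \<gamma>"
proof -
  let ?S = "{\<beta>. h \<beta> \<noteq> 0}"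
  have S: "finite ?S" and hs: "\<And>\<beta>. h \<beta> \<in> mSp X (act \<beta> x)" using h by (auto simp: pd_space_iff)
  define G where "G \<alpha> = fam_of X U \<alpha> (act \<gamma> x) (h (- \<alpha> + \<gamma>))" for \<alpha>
  have G_shift: "U (act \<alpha>' x) (delta (h \<alpha>')) (\<gamma> + - \<alpha>') = G (\<gamma> + - \<alpha>')" for \<alpha>'
  proof -
    have e: "- (\<gamma> + - \<alpha>') + \<gamma> = \<alpha>'" by (simp add: minus_add add.assoc)
    then have "act (- (\<gamma> + - \<alpha>')) (act \<gamma> x) = act \<alpha>' x" by (simp only: act_minus_act_plus[OF x])
    then show ?thesis using fam_of_apply[of "act \<gamma> x" "h \<alpha>'" "\<gamma> + - \<alpha>'"] hs x e by (simp add: G_def)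
  qed
  have inj: "inj_on (\<lambda>\<alpha>'. \<gamma> + - \<alpha>') ?S"
    by (rule inj_onI) (simp only: add_left_cancel neg_equal_iff_equal)
  have "U x h \<gamma> = (\<Sum>\<alpha>\<in>(\<lambda>\<alpha>'. \<gamma> + - \<alpha>') ` ?S. G \<alpha>)"
    using U_value[OF x h] G_shift sum.reindex[OF inj, of G] by simp
  also have "\<dots> = (\<Sum>\<alpha>\<in>supp_fam (fam_of X U). G \<alpha>)"
  proof (rule sum.mono_neutral_cong)
    show "finite ((\<lambda>\<alpha>'. \<gamma> + - \<alpha>') ` ?S)" using S by simp
    show "finite (supp_fam (fam_of X U))" by (rule fam_of_finite[OF fgX])
    fix \<alpha> assume \<alpha>: "\<alpha> \<in> supp_fam (fam_of X U) - (\<lambda>\<alpha>'. \<gamma> + - \<alpha>') ` ?S"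
    have "\<alpha> = \<gamma> + - (- \<alpha> + \<gamma>)" by (simp add: minus_add add.assoc[symmetric])
    then have "h (- \<alpha> + \<gamma>) = 0" using \<alpha> by blast
    then show "G \<alpha> = 0" using modhom_zero[OF fam_of_modhom gact_is_mod[OF X]] by (simp add: G_def)
  qed (simp_all add: G_def)
  also have "\<dots> = F1 R act actm X (fam_of X U) x h \<gamma>"
    using F1_apply[OF x h] by (simp add: G_def)
  finally show ?thesis by simp
qed

lemma F1_fam_of:
  assumes fgX: "fg R X"
  shows "F1 R act actm X (fam_of X U) = U"
proof (intro ext)
  fix x h \<gamma>
  show "F1 R act actm X (fam_of X U) x h \<gamma> = U x h \<gamma>"
  proof (cases "x \<in> cOb R \<and> h \<in> mSp (pd act X) x")
    case True
    then show ?thesis by (simp add: F1_fam_of_apply[OF fgX])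
  next
    case False
    then show ?thesis using F1_outside[OF False] U_outside[OF False] by simp
  qed
qed

end

lemma F1_bij:
  assumes X: "modR R sc X" and Y: "modR R sc Y"
  shows "bij_betw (F1 R act actm X) (dsum R act actm sc X Y) (modhom RG (psc sc) (pd act X) (pd act Y))"
proof -
  have Xm: "is_mod R sc X" and fgX: "fg R X" and Ym: "is_mod R sc Y" using X Y by (auto simp: modR_def)
  have "inj_on (F1 R act actm X) (dsum R act actm sc X Y)"
    by (rule inj_onI) (rule F1_inj[OF Xm Ym])
  moreover have "F1 R act actm X ` dsum R act actm sc X Y \<subseteq> modhom RG (psc sc) (pd act X) (pd act Y)"
    using F1_modhom[OF Xm Ym] by blast
  moreover have "modhom RG (psc sc) (pd act X) (pd act Y) \<subseteq> F1 R act actm X ` dsum R act actm sc X Y"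
    using F1_fam_of[OF Xm Ym _ fgX] fam_of_dsum[OF Xm Ym _ fgX] by (metis image_eqI subsetI)
  ultimately show ?thesis unfolding bij_betw_def by blast
qed

end

theorem mainTheorem6:
  fixes R :: "('o, 'a, 'k::comm_ring_1) kcat"
    and act :: "'g::group_add \<Rightarrow> 'o \<Rightarrow> 'o"
    and actm :: "'g \<Rightarrow> 'a \<Rightarrow> 'a"
    and sc :: "'k \<Rightarrow> 'v::ab_group_add \<Rightarrow> 'v"
  assumes "Gcat R act actm"
    and "module sc"
  shows
    "(\<forall>X. modR R sc X \<longrightarrow> modR (orbit_cat R act actm) (psc sc) (pd act X)) \<and>
     (\<forall>\<mu> X. modR R sc X \<longrightarrow>
        phi R act \<mu> X \<in> modhom (orbit_cat R act actm) (psc sc) (pd act X) (pd act (gact act actm \<mu> X)) \<and>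
        (\<exists>\<psi>\<in>modhom (orbit_cat R act actm) (psc sc) (pd act (gact act actm \<mu> X)) (pd act X).
            mcomp (cOb R) (pd act X) \<psi> (phi R act \<mu> X) = mid (cOb R) (pd act X) \<and>
            mcomp (cOb R) (pd act (gact act actm \<mu> X)) (phi R act \<mu> X) \<psi>
              = mid (cOb R) (pd act (gact act actm \<mu> X)))) \<and>
     (\<forall>\<mu> X X' u. modR R sc X \<and> modR R sc X' \<and> u \<in> modhom R sc X X' \<longrightarrow>
        mcomp (cOb R) (pd act X) (pdm R act (gact act actm \<mu> X) (gactm R act \<mu> u)) (phi R act \<mu> X)
          = mcomp (cOb R) (pd act X) (phi R act \<mu> X') (pdm R act X u)) \<and>
     (\<forall>X. modR R sc X \<longrightarrow> phi R act 0 X = mid (cOb R) (pd act X)) \<and>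
     (\<forall>\<alpha> \<beta> X. modR R sc X \<longrightarrow>
        mcomp (cOb R) (pd act X) (phi R act \<beta> (gact act actm \<alpha> X)) (phi R act \<alpha> X)
          = phi R act (\<beta> + \<alpha>) X) \<and>
     (\<forall>X Y. modR R sc X \<and> modR R sc Y \<longrightarrow>
        bij_betw (F1 R act actm X) (dsum R act actm sc X Y)
          (modhom (orbit_cat R act actm) (psc sc) (pd act X) (pd act Y)))"
proof -
  interpret G_category R act actm sc
    by (rule G_category.intro[OF assms])
  show ?thesis
    apply (intro conjI allI impI)
    subgoal using pd_modR by (simp add: modR_def)
    subgoal using phi_modhom by (simp add: modR_def)
    subgoal using phi_inverse by (auto simp: modR_def intro!: bexI[OF _ phi_inverse_modhom])
    subgoal using phi_natural by (simp add: modR_def)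
    subgoal by (rule phi_zero)
    subgoal by (rule phi_comp)
    subgoal using F1_bij by blast
    done
qed

end
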